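(* Let $P$ be a directed set. Then: (1) there is a locally compact Hausdorff space $X_P$ with $P =_T \mathcal{K}(X_P)$; (2) there is a compact Hausdorff space $K_P$ and a point $x_P \in K_P$ with $P =_T \mathcal{N}_{x_P}^{K_P}$; (3) there is a topological group $G_P$ with identity $e$ such that $P =_T \mathcal{N}_e^{G_P}$; (4) there is a locally convex topological vector space $L_P$ with $P \times \omega =_T \mathcal{N}_0^{L_P}$; (5) there is a space $Y_P$ with $P =_T \mathcal{U}_{Y_P}$; (6) there is a space $Y_P$ with $P =_T \mathcal{N}_\Delta^{Y_P^2}$.
   Context: All spaces are Tychonoff. A directed set is a partially ordered set in which any two elements have a common upper bound. For directed sets $P,Q$, $P \ge_T Q$ ($Q$ is a Tukey quotient of $P$) means there is a map $\phi:P\to Q$ such that $\phi(C)$ is cofinal in $Q$ for every cofinal $C\subseteq P$; $P =_T Q$ (Tukey equivalent) means $P\ge_T Q$ and $Q \ge_T P$. $P\times\omega$ carries the product order. For a space $X$, $\mathcal{K}(X)$ is the set of compact subsets of $X$ ordered by inclusion. For $A\subseteq X$, $\mathcal{N}_A^X$ is the family of open neighborhoods of $A$ in $X$ ordered by reverse inclusion; $\mathcal{N}_x^X=\mathcal{N}_{\{x\}}^X$, and $\Delta$ denotes the diagonal of $X^2$. $\mathcal{U}_X$ is the universal (finest compatible) uniformity of $X$, ordered by reverse inclusion. *)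

theory Defs
  imports "HOL-Analysis.Analysis" "HOL-Algebra.Group"
begin

definition directed_set :: "'a set \<Rightarrow> ('a \<Rightarrow> 'a \<Rightarrow> bool) \<Rightarrow> bool" where
  "directed_set P leq \<longleftrightarrow>
     P \<noteq> {} \<and>
     (\<forall>p\<in>P. leq p p) \<and>
     (\<forall>p\<in>P. \<forall>q\<in>P. \<forall>r\<in>P. leq p q \<longrightarrow> leq q r \<longrightarrow> leq p r) \<and>
     (\<forall>p\<in>P. \<forall>q\<in>P. leq p q \<longrightarrow> leq q p \<longrightarrow> p = q) \<and>
     (\<forall>p\<in>P. \<forall>q\<in>P. \<exists>r\<in>P. leq p r \<and> leq q r)"

definition cofinal_in :: "'a set \<Rightarrow> 'a set \<Rightarrow> ('a \<Rightarrow> 'a \<Rightarrow> bool) \<Rightarrow> bool" where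
  "cofinal_in C P leq \<longleftrightarrow> C \<subseteq> P \<and> (\<forall>p\<in>P. \<exists>c\<in>C. leq p c)"

definition tukey_ge :: "'a set \<Rightarrow> ('a \<Rightarrow> 'a \<Rightarrow> bool) \<Rightarrow> 'b set \<Rightarrow> ('b \<Rightarrow> 'b \<Rightarrow> bool) \<Rightarrow> bool" where
  "tukey_ge P leP Q leQ \<longleftrightarrow>
     (\<exists>\<phi>. \<phi> ` P \<subseteq> Q \<and> (\<forall>C. cofinal_in C P leP \<longrightarrow> cofinal_in (\<phi> ` C) Q leQ))"

definition tukey_eq :: "'a set \<Rightarrow> ('a \<Rightarrow> 'a \<Rightarrow> bool) \<Rightarrow> 'b set \<Rightarrow> ('b \<Rightarrow> 'b \<Rightarrow> bool) \<Rightarrow> bool" where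
  "tukey_eq P leP Q leQ \<longleftrightarrow> tukey_ge P leP Q leQ \<and> tukey_ge Q leQ P leP"

definition times_omega :: "'a set \<Rightarrow> ('a \<times> nat) set" where
  "times_omega P = P \<times> UNIV"

definition times_omega_le :: "('a \<Rightarrow> 'a \<Rightarrow> bool) \<Rightarrow> ('a \<times> nat) \<Rightarrow> ('a \<times> nat) \<Rightarrow> bool" where
  "times_omega_le leq x y \<longleftrightarrow> leq (fst x) (fst y) \<and> snd x \<le> snd y"

definition tychonoff_space :: "'a topology \<Rightarrow> bool" where
  "tychonoff_space X \<longleftrightarrow> t1_space X \<and> completely_regular_space X"

definition compact_sets :: "'a topology \<Rightarrow> 'a set set" where
  "compact_sets X = {K. K \<subseteq> topspace X \<and> compactin X K}"

definition nbhds :: "'a topology \<Rightarrow> 'a set \<Rightarrow> 'a set set" where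
  "nbhds X A = {U. openin X U \<and> A \<subseteq> U}"

definition rev_incl :: "'a set \<Rightarrow> 'a set \<Rightarrow> bool" where
  "rev_incl U V \<longleftrightarrow> V \<subseteq> U"

definition diagonal :: "'a topology \<Rightarrow> ('a \<times> 'a) set" where
  "diagonal X = {(x, x) | x. x \<in> topspace X}"

definition topological_group :: "'b monoid \<Rightarrow> 'b topology \<Rightarrow> bool" where
  "topological_group G T \<longleftrightarrow>
     group G \<and> topspace T = carrier G \<and>
     continuous_map (prod_topology T T) T (\<lambda>(x, y). x \<otimes>\<^bsub>G\<^esub> y) \<and>
     continuous_map T T (\<lambda>x. inv\<^bsub>G\<^esub> x)"

text \<open>Real vector spaces are represented as linear subspaces V of a function space
  \<open>'b \<Rightarrow> real\<close> (every real vector space of dimension at most the cardinality of \<open>'b\<close>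
  is isomorphic to such a subspace), with pointwise operations.\<close>
definition fadd :: "('b \<Rightarrow> real) \<Rightarrow> ('b \<Rightarrow> real) \<Rightarrow> ('b \<Rightarrow> real)" where
  "fadd f g = (\<lambda>x. f x + g x)"

definition fscale :: "real \<Rightarrow> ('b \<Rightarrow> real) \<Rightarrow> ('b \<Rightarrow> real)" where
  "fscale c f = (\<lambda>x. c * f x)"

definition fzero :: "'b \<Rightarrow> real" where
  "fzero = (\<lambda>x. 0)"

definition convex_in :: "('b \<Rightarrow> real) set \<Rightarrow> bool" where
  "convex_in W \<longleftrightarrow>
     (\<forall>f\<in>W. \<forall>g\<in>W. \<forall>t::real. 0 \<le> t \<and> t \<le> 1 \<longrightarrow> fadd (fscale t f) (fscale (1 - t) g) \<in> W)"

definition locally_convex_tvs :: "('b \<Rightarrow> real) set \<Rightarrow> ('b \<Rightarrow> real) topology \<Rightarrow> bool" where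
  "locally_convex_tvs V T \<longleftrightarrow>
     fzero \<in> V \<and>
     (\<forall>f\<in>V. \<forall>g\<in>V. fadd f g \<in> V) \<and>
     (\<forall>c. \<forall>f\<in>V. fscale c f \<in> V) \<and>
     topspace T = V \<and>
     continuous_map (prod_topology T T) T (\<lambda>(f, g). fadd f g) \<and>
     continuous_map (prod_topology euclideanreal T) T (\<lambda>(c, f). fscale c f) \<and>
     (\<forall>U. openin T U \<and> fzero \<in> U \<longrightarrow>
        (\<exists>W. openin T W \<and> fzero \<in> W \<and> W \<subseteq> U \<and> convex_in W))"

definition uniformity_on :: "'a set \<Rightarrow> ('a \<times> 'a) set set \<Rightarrow> bool" where
  "uniformity_on Y \<U> \<longleftrightarrow>
     \<U> \<noteq> {} \<and>
     (\<forall>U\<in>\<U>. U \<subseteq> Y \<times> Y \<and> Id_on Y \<subseteq> U \<and> U\<inverse> \<in> \<U>) \<and>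
     (\<forall>U\<in>\<U>. \<forall>V. U \<subseteq> V \<and> V \<subseteq> Y \<times> Y \<longrightarrow> V \<in> \<U>) \<and>
     (\<forall>U\<in>\<U>. \<forall>V\<in>\<U>. U \<inter> V \<in> \<U>) \<and>
     (\<forall>U\<in>\<U>. \<exists>V\<in>\<U>. V O V \<subseteq> U)"

definition compatible_uniformity :: "'a topology \<Rightarrow> ('a \<times> 'a) set set \<Rightarrow> bool" where
  "compatible_uniformity X \<U> \<longleftrightarrow>
     uniformity_on (topspace X) \<U> \<and>
     (\<forall>S. openin X S \<longleftrightarrow> S \<subseteq> topspace X \<and> (\<forall>x\<in>S. \<exists>U\<in>\<U>. U `` {x} \<subseteq> S))"

definition universal_uniformity :: "'a topology \<Rightarrow> ('a \<times> 'a) set set \<Rightarrow> bool" where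
  "universal_uniformity X \<U> \<longleftrightarrow>
     compatible_uniformity X \<U> \<and> (\<forall>\<V>. compatible_uniformity X \<V> \<longrightarrow> \<V> \<subseteq> \<U>)"

text \<open>Universe type in which the witnessing spaces are sought.\<close>
type_synonym 'a univ = "('a \<times> nat) set set set"

end

theory Submission
  imports Defs
begin

text \<open>
  Each witness carries a family of basic sets \<open>B p\<close>, \<open>p \<in> P\<close>, which shrinks as \<open>p\<close> grows, reflects
  the order of \<open>P\<close>, and is cofinal among the neighbourhoods (entourages, compact sets) in question;
  such a cofinal order embedding is a Tukey equivalence.

  \<^item> \<open>K\<^sub>P\<close> is the space of up-sets of \<open>P\<close> inside the Cantor cube \<open>2\<^sup>P\<close>; the up-sets not containing
    \<open>p\<close> are basic neighbourhoods of the empty up-set \<open>x\<^sub>P\<close>. Then \<open>X\<^sub>P = K\<^sub>P - {x\<^sub>P}\<close>.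
  \<^item> \<open>G\<^sub>P\<close> is the Boolean group of finite subsets of \<open>P\<close>; the subgroups of sets missing the down-set
    of \<open>p\<close> form a neighbourhood base of the identity.
  \<^item> \<open>L\<^sub>P\<close> is the space of finitely supported functions on \<open>P\<close> with the seminorms
    \<open>\<Sum>\<^bsub>q \<le> p\<^esub> \<bar>f q\<bar>\<close>; the balls of radius \<open>1 / (n + 1)\<close> are indexed by \<open>P \<times> \<omega>\<close>, and multiples of
    unit vectors show that they are order-embedded.
  \<^item> \<open>Y\<^sub>P\<close> adds to the discrete space \<open>P\<close> a point \<open>\<infinity>\<close> with basic neighbourhoods
    \<open>{\<infinity>} \<union> {q. \<not> q \<le> p}\<close>. The equivalence relations collapsing one of these neighbourhoods
    generate a compatible uniformity which every compatible entourage contains, hence the universal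
    one, and they are also cofinal among the neighbourhoods of the diagonal.

  \<open>Y\<^sub>P\<close>, \<open>G\<^sub>P\<close> and \<open>L\<^sub>P\<close> are topologised by directed families of pseudometrics, which always yield
  Tychonoff spaces.
\<close>

section \<open>Directed sets and Tukey equivalence\<close>

lemma directed_set_nonempty: "directed_set P leq \<Longrightarrow> P \<noteq> {}"
  by (simp add: directed_set_def)

lemma directed_set_refl: "directed_set P leq \<Longrightarrow> p \<in> P \<Longrightarrow> leq p p"
  by (simp add: directed_set_def)

lemma directed_set_trans:
  "directed_set P leq \<Longrightarrow> p \<in> P \<Longrightarrow> q \<in> P \<Longrightarrow> r \<in> P \<Longrightarrow> leq p q \<Longrightarrow> leq q r \<Longrightarrow> leq p r"
  unfolding directed_set_def by blast

lemma directed_set_upper_bound: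
  "directed_set P leq \<Longrightarrow> p \<in> P \<Longrightarrow> q \<in> P \<Longrightarrow> \<exists>r\<in>P. leq p r \<and> leq q r"
  unfolding directed_set_def by (elim conjE) fast

lemma directed_set_finite_upper_bound:
  assumes dir: "directed_set P leq" and "finite F" "F \<subseteq> P"
  shows "\<exists>r\<in>P. \<forall>q\<in>F. leq q r"
  using assms(2,3)
proof (induction F rule: finite_induct)
  case empty
  then show ?case using directed_set_nonempty[OF dir] by blast
next
  case (insert a F)
  then obtain r where r: "r \<in> P" "\<forall>q\<in>F. leq q r" by blast
  obtain s where s: "s \<in> P" "leq a s" "leq r s"
    using directed_set_upper_bound[OF dir _ r(1)] insert.prems by blast
  have "\<forall>q\<in>F. leq q s"
    using directed_set_trans[OF dir _ r(1) s(1)] r(2) s(3) insert.prems by blast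
  then show ?case using s by blast
qed

definition down_set :: "'a set \<Rightarrow> ('a \<Rightarrow> 'a \<Rightarrow> bool) \<Rightarrow> 'a \<Rightarrow> 'a set" where
  "down_set P leq p = {q \<in> P. leq q p}"

lemma down_set_mono:
  assumes "directed_set P leq" "p \<in> P" "r \<in> P" "leq p r"
  shows "down_set P leq p \<subseteq> down_set P leq r"
  using directed_set_trans[OF assms(1) _ assms(2,3) _ assms(4)] by (auto simp: down_set_def)

lemma self_in_down_set: "directed_set P leq \<Longrightarrow> p \<in> P \<Longrightarrow> p \<in> down_set P leq p"
  by (simp add: down_set_def directed_set_refl)

lemma tukey_ge_trans:
  assumes "tukey_ge P leP Q leQ" "tukey_ge Q leQ R leR"
  shows "tukey_ge P leP R leR"
proof -
  obtain f where f: "f ` P \<subseteq> Q" "\<And>C. cofinal_in C P leP \<Longrightarrow> cofinal_in (f ` C) Q leQ"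
    using assms(1) unfolding tukey_ge_def by blast
  obtain g where g: "g ` Q \<subseteq> R" "\<And>C. cofinal_in C Q leQ \<Longrightarrow> cofinal_in (g ` C) R leR"
    using assms(2) unfolding tukey_ge_def by blast
  have "(g \<circ> f) ` P \<subseteq> R" using f g by auto
  moreover have "cofinal_in ((g \<circ> f) ` C) R leR" if "cofinal_in C P leP" for C
    using g(2)[OF f(2)[OF that]] by (simp add: image_comp)
  ultimately show ?thesis unfolding tukey_ge_def by blast
qed

lemma tukey_eq_sym: "tukey_eq P leP Q leQ \<Longrightarrow> tukey_eq Q leQ P leP"
  by (simp add: tukey_eq_def)

lemma tukey_eq_trans:
  "tukey_eq P leP Q leQ \<Longrightarrow> tukey_eq Q leQ R leR \<Longrightarrow> tukey_eq P leP R leR"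
  unfolding tukey_eq_def by (meson tukey_ge_trans)

text \<open>Cofinal sets are carried forward by \<open>B\<close> and back by any choice of preimages lying above.\<close>
lemma tukey_eq_if_cofinal_embedding:
  assumes into: "B ` A \<subseteq> Q"
    and embedding: "\<And>p p'. p \<in> A \<Longrightarrow> p' \<in> A \<Longrightarrow> lq (B p) (B p') \<longleftrightarrow> la p p'"
    and cofinal: "\<And>q. q \<in> Q \<Longrightarrow> \<exists>p\<in>A. lq q (B p)"
    and trans: "transp_on Q lq"
  shows "tukey_eq A la Q lq"
proof -
  have lq_trans: "lq x z" if "x \<in> Q" "y \<in> Q" "z \<in> Q" "lq x y" "lq y z" for x y z
    using trans that unfolding transp_on_def by blast
  define \<psi> where "\<psi> q = (SOME p. p \<in> A \<and> lq q (B p))" for q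
  have \<psi>: "\<psi> q \<in> A" "lq q (B (\<psi> q))" if "q \<in> Q" for q
    using someI_ex[of "\<lambda>p. p \<in> A \<and> lq q (B p)"] cofinal[OF that] unfolding \<psi>_def by blast+
  have "tukey_ge A la Q lq"
    unfolding tukey_ge_def
  proof (intro exI[of _ B] conjI allI impI into)
    fix C assume C: "cofinal_in C A la"
    show "cofinal_in (B ` C) Q lq"
      unfolding cofinal_in_def
    proof (intro conjI ballI)
      show "B ` C \<subseteq> Q" using C into by (auto simp: cofinal_in_def)
      fix q assume q: "q \<in> Q"
      obtain p where p: "p \<in> A" "lq q (B p)" using cofinal[OF q] by blast
      obtain c where c: "c \<in> C" "la p c" "c \<in> A" using C p(1) unfolding cofinal_in_def by blast
      have "lq (B p) (B c)" using embedding p(1) c by blast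
      then show "\<exists>x\<in>B ` C. lq q x" using lq_trans[OF q _ _ p(2)] into p(1) c by blast
    qed
  qed
  moreover have "tukey_ge Q lq A la"
    unfolding tukey_ge_def
  proof (intro exI[of _ \<psi>] conjI allI impI)
    show "\<psi> ` Q \<subseteq> A" using \<psi> by blast
    fix C assume C: "cofinal_in C Q lq"
    show "cofinal_in (\<psi> ` C) A la"
      unfolding cofinal_in_def
    proof (intro conjI ballI)
      show "\<psi> ` C \<subseteq> A" using C \<psi> by (auto simp: cofinal_in_def)
      fix a assume a: "a \<in> A"
      obtain c where c: "c \<in> C" "lq (B a) c" "c \<in> Q"
        using C into a unfolding cofinal_in_def by blast
      have "lq (B a) (B (\<psi> c))" using lq_trans c \<psi>[OF c(3)] into a by blast
      then show "\<exists>x\<in>\<psi> ` C. la a x" using embedding a \<psi>[OF c(3)] c(1) by blast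
    qed
  qed
  ultimately show ?thesis unfolding tukey_eq_def by blast
qed

lemma transp_on_rev_incl: "transp_on Q rev_incl"
  by (auto simp: transp_on_def rev_incl_def)

section \<open>Topologies of directed families of pseudometrics\<close>

definition directed_pseudometrics :: "'i set \<Rightarrow> ('i \<Rightarrow> 'x \<Rightarrow> 'x \<Rightarrow> real) \<Rightarrow> 'x set \<Rightarrow> bool" where
  "directed_pseudometrics I d V \<longleftrightarrow> I \<noteq> {} \<and>
     (\<forall>i\<in>I. \<forall>x\<in>V. d i x x = 0) \<and>
     (\<forall>i\<in>I. \<forall>x\<in>V. \<forall>y\<in>V. d i x y = d i y x) \<and>
     (\<forall>i\<in>I. \<forall>x\<in>V. \<forall>y\<in>V. \<forall>z\<in>V. d i x z \<le> d i x y + d i y z) \<and>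
     (\<forall>i\<in>I. \<forall>j\<in>I. \<exists>k\<in>I. \<forall>x\<in>V. \<forall>y\<in>V. d i x y \<le> d k x y \<and> d j x y \<le> d k x y)"

definition gauge_ball :: "('i \<Rightarrow> 'x \<Rightarrow> 'x \<Rightarrow> real) \<Rightarrow> 'x set \<Rightarrow> 'i \<Rightarrow> 'x \<Rightarrow> real \<Rightarrow> 'x set" where
  "gauge_ball d V i x r = {y\<in>V. d i x y < r}"

definition gauge_topology :: "'i set \<Rightarrow> ('i \<Rightarrow> 'x \<Rightarrow> 'x \<Rightarrow> real) \<Rightarrow> 'x set \<Rightarrow> 'x topology" where
  "gauge_topology I d V = topology (\<lambda>U. U \<subseteq> V \<and> (\<forall>x\<in>U. \<exists>i\<in>I. \<exists>r>0. gauge_ball d V i x r \<subseteq> U))"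

context
  fixes I d V
  assumes gauge: "directed_pseudometrics I d V"
begin

lemma gauge_self: "i \<in> I \<Longrightarrow> x \<in> V \<Longrightarrow> d i x x = 0"
  using gauge by (simp add: directed_pseudometrics_def)

lemma gauge_sym: "i \<in> I \<Longrightarrow> x \<in> V \<Longrightarrow> y \<in> V \<Longrightarrow> d i x y = d i y x"
  using gauge by (simp add: directed_pseudometrics_def)

lemma gauge_triangle: "i \<in> I \<Longrightarrow> x \<in> V \<Longrightarrow> y \<in> V \<Longrightarrow> z \<in> V \<Longrightarrow> d i x z \<le> d i x y + d i y z"
  using gauge by (simp add: directed_pseudometrics_def)

lemma gauge_upper_bound:
  "i \<in> I \<Longrightarrow> j \<in> I \<Longrightarrow> \<exists>k\<in>I. \<forall>x\<in>V. \<forall>y\<in>V. d i x y \<le> d k x y \<and> d j x y \<le> d k x y"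
  using gauge unfolding directed_pseudometrics_def by blast

lemma openin_gauge_topology:
  "openin (gauge_topology I d V) U \<longleftrightarrow> U \<subseteq> V \<and> (\<forall>x\<in>U. \<exists>i\<in>I. \<exists>r>0. gauge_ball d V i x r \<subseteq> U)"
proof -
  have "istopology (\<lambda>U. U \<subseteq> V \<and> (\<forall>x\<in>U. \<exists>i\<in>I. \<exists>r>0. gauge_ball d V i x r \<subseteq> U))"
    unfolding istopology_def
  proof (rule conjI; intro allI impI)
    fix S T
    assume S: "S \<subseteq> V \<and> (\<forall>x\<in>S. \<exists>i\<in>I. \<exists>r>0. gauge_ball d V i x r \<subseteq> S)"
      and T: "T \<subseteq> V \<and> (\<forall>x\<in>T. \<exists>i\<in>I. \<exists>r>0. gauge_ball d V i x r \<subseteq> T)"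
    have "\<exists>k\<in>I. \<exists>t>0. gauge_ball d V k x t \<subseteq> S \<inter> T" if x: "x \<in> S \<inter> T" for x
    proof -
      obtain i r where i: "i \<in> I" "r > 0" "gauge_ball d V i x r \<subseteq> S" using S x by blast
      obtain j s where j: "j \<in> I" "s > 0" "gauge_ball d V j x s \<subseteq> T" using T x by blast
      obtain k where k: "k \<in> I" "\<forall>x\<in>V. \<forall>y\<in>V. d i x y \<le> d k x y \<and> d j x y \<le> d k x y"
        using gauge_upper_bound[OF i(1) j(1)] by blast
      have xV: "x \<in> V" using x S by blast
      have "gauge_ball d V k x (min r s) \<subseteq> gauge_ball d V i x r \<inter> gauge_ball d V j x s"
        using k(2) xV by (fastforce simp: gauge_ball_def)
      then have "gauge_ball d V k x (min r s) \<subseteq> S \<inter> T" using i(3) j(3) by blast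
      then show ?thesis using k(1) i(2) j(2) by (intro bexI exI[of _ "min r s"]) auto
    qed
    then show "S \<inter> T \<subseteq> V \<and> (\<forall>x\<in>S \<inter> T. \<exists>i\<in>I. \<exists>r>0. gauge_ball d V i x r \<subseteq> S \<inter> T)"
      using S by blast
  next
    fix K
    assume "\<forall>S\<in>K. S \<subseteq> V \<and> (\<forall>x\<in>S. \<exists>i\<in>I. \<exists>r>0. gauge_ball d V i x r \<subseteq> S)"
    then show "\<Union>K \<subseteq> V \<and> (\<forall>x\<in>\<Union>K. \<exists>i\<in>I. \<exists>r>0. gauge_ball d V i x r \<subseteq> \<Union>K)"
      by (meson UnionE Union_least Union_upper order_trans)
  qed
  then show ?thesis by (simp add: gauge_topology_def)
qed

lemma topspace_gauge_topology: "topspace (gauge_topology I d V) = V"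
proof -
  obtain i where "i \<in> I" using gauge by (auto simp: directed_pseudometrics_def)
  then have "openin (gauge_topology I d V) V"
    by (auto simp: openin_gauge_topology gauge_ball_def intro!: exI[of _ 1])
  then show ?thesis
    by (metis openin_gauge_topology openin_subset openin_topspace subset_antisym)
qed

lemma centre_in_gauge_ball: "i \<in> I \<Longrightarrow> x \<in> V \<Longrightarrow> r > 0 \<Longrightarrow> x \<in> gauge_ball d V i x r"
  by (simp add: gauge_ball_def gauge_self)

lemma openin_gauge_ball:
  assumes "i \<in> I" "x \<in> V"
  shows "openin (gauge_topology I d V) (gauge_ball d V i x r)"
  unfolding openin_gauge_topology
proof (intro conjI ballI)
  show "gauge_ball d V i x r \<subseteq> V" by (auto simp: gauge_ball_def)
  fix y assume y: "y \<in> gauge_ball d V i x r"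
  have "gauge_ball d V i y (r - d i x y) \<subseteq> gauge_ball d V i x r"
    using gauge_triangle[OF assms(1,2)] y by (fastforce simp: gauge_ball_def)
  moreover have "r - d i x y > 0" using y by (simp add: gauge_ball_def)
  ultimately show "\<exists>j\<in>I. \<exists>s>0. gauge_ball d V j y s \<subseteq> gauge_ball d V i x r"
    using assms(1) by blast
qed

lemma continuous_map_gauge_distance:
  assumes "i \<in> I" "x \<in> V"
  shows "continuous_map (gauge_topology I d V) euclideanreal (d i x)"
  unfolding continuous_map_def topspace_gauge_topology
proof (intro conjI allI impI)
  show "d i x \<in> V \<rightarrow> topspace euclideanreal" by simp
  fix U :: "real set" assume "openin euclideanreal U"
  then have U: "open U" by simp
  show "openin (gauge_topology I d V) {y \<in> V. d i x y \<in> U}"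
    unfolding openin_gauge_topology
  proof (intro conjI ballI)
    fix y assume y: "y \<in> {y \<in> V. d i x y \<in> U}"
    then obtain e where e: "e > 0" "ball (d i x y) e \<subseteq> U" using U open_contains_ball by blast
    have "gauge_ball d V i y e \<subseteq> {y \<in> V. d i x y \<in> U}"
    proof
      fix z assume z: "z \<in> gauge_ball d V i y e"
      then have zV: "z \<in> V" by (simp add: gauge_ball_def)
      have yV: "y \<in> V" using y by blast
      have "d i x z \<le> d i x y + d i y z" "d i x y \<le> d i x z + d i z y" "d i z y = d i y z"
        using gauge_triangle[OF assms yV zV] gauge_triangle[OF assms zV yV] gauge_sym[OF assms(1) zV yV]
        by auto
      then have "\<bar>d i x y - d i x z\<bar> \<le> d i y z" by linarith
      then have "d i x z \<in> ball (d i x y) e" using z by (simp add: gauge_ball_def dist_real_def)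
      then show "z \<in> {y \<in> V. d i x y \<in> U}" using e zV by blast
    qed
    then show "\<exists>j\<in>I. \<exists>s>0. gauge_ball d V j y s \<subseteq> {y \<in> V. d i x y \<in> U}"
      using assms(1) e(1) by blast
  qed auto
qed

lemma tychonoff_gauge_topology:
  assumes separating: "\<And>x y. x \<in> V \<Longrightarrow> y \<in> V \<Longrightarrow> x \<noteq> y \<Longrightarrow> \<exists>i\<in>I. d i x y > 0"
  shows "tychonoff_space (gauge_topology I d V)"
  unfolding tychonoff_space_def
proof
  show "t1_space (gauge_topology I d V)"
    unfolding t1_space_def topspace_gauge_topology
  proof (intro ballI impI)
    fix x y assume xy: "x \<in> V" "y \<in> V" "x \<noteq> y"
    then obtain i where i: "i \<in> I" "d i x y > 0" using separating by blast
    then show "\<exists>U. openin (gauge_topology I d V) U \<and> x \<in> U \<and> y \<notin> U"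
      using openin_gauge_ball[OF i(1) xy(1)] centre_in_gauge_ball[OF i(1) xy(1) i(2)]
      by (auto simp: gauge_ball_def)
  qed
  show "completely_regular_space (gauge_topology I d V)"
    unfolding completely_regular_space_alt'
  proof (intro allI impI)
    fix S x assume S: "openin (gauge_topology I d V) S" and x: "x \<in> S"
    then obtain i r where i: "i \<in> I" "r > 0" "gauge_ball d V i x r \<subseteq> S"
      by (auto simp: openin_gauge_topology)
    have xV: "x \<in> V" using S x by (auto simp: openin_gauge_topology)
    let ?f = "\<lambda>y. min 1 (d i x y / r)"
    have "continuous_map (gauge_topology I d V) euclideanreal ?f"
      using continuous_map_gauge_distance[OF i(1) xV] i(2) by (intro continuous_intros) auto
    moreover have "?f x = 0" using gauge_self[OF i(1) xV] by simp
    moreover have "?f ` (topspace (gauge_topology I d V) - S) \<subseteq> {1}"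
    proof (clarsimp simp: topspace_gauge_topology)
      fix y assume "y \<in> V" "y \<notin> S"
      then have "r \<le> d i x y" using i(3) by (force simp: gauge_ball_def)
      then show "min 1 (d i x y / r) = 1" using i(2) by simp
    qed
    ultimately show "\<exists>f. continuous_map (gauge_topology I d V) euclideanreal f \<and>
        f x = 0 \<and> f ` (topspace (gauge_topology I d V) - S) \<subseteq> {1}"
      by blast
  qed
qed

lemma continuous_map_into_gauge_topology:
  assumes "f \<in> topspace X \<rightarrow> V"
    and local: "\<And>x i r. x \<in> topspace X \<Longrightarrow> i \<in> I \<Longrightarrow> r > 0 \<Longrightarrow>
        \<exists>U. openin X U \<and> x \<in> U \<and> f ` U \<subseteq> gauge_ball d V i (f x) r"
  shows "continuous_map X (gauge_topology I d V) f"
  unfolding continuous_map_def topspace_gauge_topology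
proof (intro conjI allI impI assms(1))
  fix S assume S: "openin (gauge_topology I d V) S"
  show "openin X {x \<in> topspace X. f x \<in> S}"
  proof (subst openin_subopen, intro ballI)
    fix x assume x: "x \<in> {x \<in> topspace X. f x \<in> S}"
    then obtain i r where i: "i \<in> I" "r > 0" and ball: "gauge_ball d V i (f x) r \<subseteq> S"
      using S by (auto simp: openin_gauge_topology)
    obtain U where U: "openin X U" "x \<in> U" "f ` U \<subseteq> gauge_ball d V i (f x) r"
      using local[OF _ i] x by blast
    then have "U \<subseteq> {x \<in> topspace X. f x \<in> S}" using openin_subset ball by blast
    then show "\<exists>T. openin X T \<and> x \<in> T \<and> T \<subseteq> {x \<in> topspace X. f x \<in> S}"
      using U by blast
  qed
qed

end

section \<open>Topologies of directed families of equivalence relations\<close>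

definition discrete_pseudometric :: "('x \<times> 'x) set \<Rightarrow> 'x \<Rightarrow> 'x \<Rightarrow> real" where
  "discrete_pseudometric R x y = (if (x, y) \<in> R then 0 else 1)"

definition directed_equivs :: "'i set \<Rightarrow> ('i \<Rightarrow> ('x \<times> 'x) set) \<Rightarrow> 'x set \<Rightarrow> bool" where
  "directed_equivs I R V \<longleftrightarrow> I \<noteq> {} \<and> (\<forall>i\<in>I. equiv V (R i)) \<and> (\<forall>i\<in>I. \<forall>j\<in>I. \<exists>k\<in>I. R k \<subseteq> R i \<inter> R j)"

definition equivs_topology :: "'i set \<Rightarrow> ('i \<Rightarrow> ('x \<times> 'x) set) \<Rightarrow> 'x set \<Rightarrow> 'x topology" where
  "equivs_topology I R V = gauge_topology I (\<lambda>i. discrete_pseudometric (R i)) V"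

definition equivs_uniformity :: "'i set \<Rightarrow> ('i \<Rightarrow> ('x \<times> 'x) set) \<Rightarrow> 'x set \<Rightarrow> ('x \<times> 'x) set set" where
  "equivs_uniformity I R V = {U. U \<subseteq> V \<times> V \<and> (\<exists>i\<in>I. R i \<subseteq> U)}"

context
  fixes I R V
  assumes equivs: "directed_equivs I R V"
begin

lemma equivs_equiv: "i \<in> I \<Longrightarrow> equiv V (R i)"
  using equivs by (simp add: directed_equivs_def)

lemma equivs_subset: "i \<in> I \<Longrightarrow> R i \<subseteq> V \<times> V"
  using equivs_equiv by (simp add: equiv_def refl_on_def)

lemma equivs_refl: "i \<in> I \<Longrightarrow> x \<in> V \<Longrightarrow> (x, x) \<in> R i"
  using equivs_equiv by (meson equiv_class_self Image_singleton_iff)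

lemma equivs_sym: "i \<in> I \<Longrightarrow> (x, y) \<in> R i \<Longrightarrow> (y, x) \<in> R i"
  using equivs_equiv by (meson equivE symD)

lemma equivs_trans: "i \<in> I \<Longrightarrow> (x, y) \<in> R i \<Longrightarrow> (y, z) \<in> R i \<Longrightarrow> (x, z) \<in> R i"
  using equivs_equiv by (meson equivE transD)

lemma equivs_lower_bound: "i \<in> I \<Longrightarrow> j \<in> I \<Longrightarrow> \<exists>k\<in>I. R k \<subseteq> R i \<inter> R j"
  using equivs by (simp add: directed_equivs_def)

lemma directed_pseudometrics_discrete: "directed_pseudometrics I (\<lambda>i. discrete_pseudometric (R i)) V"
  unfolding directed_pseudometrics_def
proof (intro conjI ballI)
  show "I \<noteq> {}" using equivs by (simp add: directed_equivs_def)
  fix i assume i: "i \<in> I"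
  fix x assume x: "x \<in> V"
  show "discrete_pseudometric (R i) x x = 0"
    using equivs_refl[OF i x] by (simp add: discrete_pseudometric_def)
  fix y assume y: "y \<in> V"
  show "discrete_pseudometric (R i) x y = discrete_pseudometric (R i) y x"
    using equivs_sym[OF i] by (auto simp: discrete_pseudometric_def)
  fix z assume z: "z \<in> V"
  show "discrete_pseudometric (R i) x z \<le> discrete_pseudometric (R i) x y + discrete_pseudometric (R i) y z"
    using equivs_trans[OF i, of x y z] by (simp add: discrete_pseudometric_def)
next
  fix i j assume "i \<in> I" "j \<in> I"
  then obtain k where "k \<in> I" "R k \<subseteq> R i \<inter> R j" using equivs_lower_bound by blast
  then show "\<exists>k\<in>I. \<forall>x\<in>V. \<forall>y\<in>V. discrete_pseudometric (R i) x y \<le> discrete_pseudometric (R k) x y \<and>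
      discrete_pseudometric (R j) x y \<le> discrete_pseudometric (R k) x y"
    by (auto simp: discrete_pseudometric_def)
qed

lemma gauge_ball_discrete_pseudometric:
  assumes "i \<in> I" "0 < r" "r \<le> 1"
  shows "gauge_ball (\<lambda>i. discrete_pseudometric (R i)) V i x r = R i `` {x}"
  using equivs_subset[OF assms(1)] assms(2,3) by (auto simp: gauge_ball_def discrete_pseudometric_def)

lemma topspace_equivs_topology: "topspace (equivs_topology I R V) = V"
  by (simp add: equivs_topology_def topspace_gauge_topology[OF directed_pseudometrics_discrete])

lemma openin_equivs_topology:
  "openin (equivs_topology I R V) S \<longleftrightarrow> S \<subseteq> V \<and> (\<forall>x\<in>S. \<exists>i\<in>I. R i `` {x} \<subseteq> S)"
proof -
  have "(\<exists>r>0. gauge_ball (\<lambda>i. discrete_pseudometric (R i)) V i x r \<subseteq> S) \<longleftrightarrow> R i `` {x} \<subseteq> S"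
    if "i \<in> I" for i x
  proof
    assume "\<exists>r>0. gauge_ball (\<lambda>i. discrete_pseudometric (R i)) V i x r \<subseteq> S"
    then obtain r where "r > 0" "gauge_ball (\<lambda>i. discrete_pseudometric (R i)) V i x r \<subseteq> S" by blast
    then show "R i `` {x} \<subseteq> S"
      using equivs_subset[OF that] by (auto simp: gauge_ball_def discrete_pseudometric_def)
  next
    assume "R i `` {x} \<subseteq> S"
    then show "\<exists>r>0. gauge_ball (\<lambda>i. discrete_pseudometric (R i)) V i x r \<subseteq> S"
      using gauge_ball_discrete_pseudometric[OF that] by (intro exI[of _ 1]) simp
  qed
  then show ?thesis
    unfolding equivs_topology_def openin_gauge_topology[OF directed_pseudometrics_discrete] by meson
qed

lemma openin_equivs_topology_class:
  assumes "i \<in> I"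
  shows "openin (equivs_topology I R V) (R i `` {x})"
  unfolding openin_equivs_topology
proof (intro conjI ballI)
  show "R i `` {x} \<subseteq> V" using equivs_subset[OF assms] by blast
  fix y assume "y \<in> R i `` {x}"
  then have "R i `` {y} \<subseteq> R i `` {x}"
    using equivs_trans[OF assms] equivs_sym[OF assms] by blast
  then show "\<exists>j\<in>I. R j `` {y} \<subseteq> R i `` {x}" using assms by blast
qed

lemma openin_prod_equivs_topology_relation:
  assumes "i \<in> I"
  shows "openin (prod_topology (equivs_topology I R V) (equivs_topology I R V)) (R i)"
  unfolding openin_prod_topology_alt
proof (intro allI impI)
  fix x y assume xy: "(x, y) \<in> R i"
  have "R i `` {x} \<times> R i `` {y} \<subseteq> R i"
    using equivs_trans[OF assms] equivs_sym[OF assms] xy by blast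
  moreover have "x \<in> R i `` {x}" "y \<in> R i `` {y}"
    using equivs_refl[OF assms] equivs_subset[OF assms] xy by blast+
  ultimately show "\<exists>U W. openin (equivs_topology I R V) U \<and> openin (equivs_topology I R V) W \<and>
      x \<in> U \<and> y \<in> W \<and> U \<times> W \<subseteq> R i"
    using openin_equivs_topology_class[OF assms] by blast
qed

lemma tychonoff_equivs_topology:
  assumes "\<And>x y. x \<in> V \<Longrightarrow> y \<in> V \<Longrightarrow> x \<noteq> y \<Longrightarrow> \<exists>i\<in>I. (x, y) \<notin> R i"
  shows "tychonoff_space (equivs_topology I R V)"
  unfolding equivs_topology_def
  by (rule tychonoff_gauge_topology[OF directed_pseudometrics_discrete])
    (use assms in \<open>force simp: discrete_pseudometric_def\<close>)

lemma continuous_map_into_equivs_topology: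
  assumes "f \<in> topspace X \<rightarrow> V"
    and "\<And>x i. x \<in> topspace X \<Longrightarrow> i \<in> I \<Longrightarrow> \<exists>U. openin X U \<and> x \<in> U \<and> (\<forall>y\<in>U. (f x, f y) \<in> R i)"
  shows "continuous_map X (equivs_topology I R V) f"
  unfolding equivs_topology_def
proof (rule continuous_map_into_gauge_topology[OF directed_pseudometrics_discrete assms(1)])
  fix x i and r :: real assume x: "x \<in> topspace X" and i: "i \<in> I" and "r > 0"
  obtain U where U: "openin X U" "x \<in> U" "\<forall>y\<in>U. (f x, f y) \<in> R i" using assms(2)[OF x i] by blast
  have "f ` U \<subseteq> V" using assms(1) openin_subset[OF U(1)] by blast
  then have "f ` U \<subseteq> gauge_ball (\<lambda>i. discrete_pseudometric (R i)) V i (f x) r"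
    using U(3) \<open>r > 0\<close> by (auto simp: gauge_ball_def discrete_pseudometric_def)
  then show "\<exists>U. openin X U \<and> x \<in> U \<and> f ` U \<subseteq> gauge_ball (\<lambda>i. discrete_pseudometric (R i)) V i (f x) r"
    using U by blast
qed

lemma tukey_eq_nbhds_equivs_topology:
  assumes "x \<in> V"
    and classes: "\<And>i j. i \<in> I \<Longrightarrow> j \<in> I \<Longrightarrow> R j `` {x} \<subseteq> R i `` {x} \<longleftrightarrow> leq i j"
  shows "tukey_eq I leq (nbhds (equivs_topology I R V) {x}) rev_incl"
proof (rule tukey_eq_if_cofinal_embedding[OF _ _ _ transp_on_rev_incl])
  have "x \<in> R i `` {x}" if "i \<in> I" for i
    using equivs_refl[OF that assms(1)] by blast
  then show "(\<lambda>i. R i `` {x}) ` I \<subseteq> nbhds (equivs_topology I R V) {x}"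
    using openin_equivs_topology_class by (auto simp: nbhds_def)
  show "rev_incl (R i `` {x}) (R j `` {x}) \<longleftrightarrow> leq i j" if "i \<in> I" "j \<in> I" for i j
    using classes[OF that] by (simp add: rev_incl_def)
  show "\<exists>i\<in>I. rev_incl N (R i `` {x})" if "N \<in> nbhds (equivs_topology I R V) {x}" for N
    using that by (auto simp: nbhds_def openin_equivs_topology rev_incl_def)
qed

lemma uniformity_on_equivs_uniformity: "uniformity_on V (equivs_uniformity I R V)"
  unfolding uniformity_on_def
proof (intro conjI ballI allI impI)
  obtain i where i: "i \<in> I" using equivs by (auto simp: directed_equivs_def)
  then have "R i \<in> equivs_uniformity I R V"
    using equivs_subset[OF i] unfolding equivs_uniformity_def by blast
  then show "equivs_uniformity I R V \<noteq> {}" by blast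
next
  fix U assume "U \<in> equivs_uniformity I R V"
  then obtain i where i: "i \<in> I" "R i \<subseteq> U" "U \<subseteq> V \<times> V" by (auto simp: equivs_uniformity_def)
  show "U \<subseteq> V \<times> V" by (fact i(3))
  show "Id_on V \<subseteq> U" using equivs_refl[OF i(1)] i(2) by blast
  have "R i \<subseteq> U\<inverse>" using equivs_sym[OF i(1)] i(2) by auto
  moreover have "U\<inverse> \<subseteq> V \<times> V" using i(3) by blast
  ultimately show "U\<inverse> \<in> equivs_uniformity I R V" using i(1) unfolding equivs_uniformity_def by blast
  have "R i O R i \<subseteq> U" using equivs_trans[OF i(1)] i(2) by blast
  moreover have "R i \<in> equivs_uniformity I R V"
    using i(1) equivs_subset[OF i(1)] unfolding equivs_uniformity_def by blast
  ultimately show "\<exists>W\<in>equivs_uniformity I R V. W O W \<subseteq> U" by blast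
next
  fix U W assume "U \<in> equivs_uniformity I R V" "U \<subseteq> W \<and> W \<subseteq> V \<times> V"
  then show "W \<in> equivs_uniformity I R V" unfolding equivs_uniformity_def by blast
next
  fix U W assume "U \<in> equivs_uniformity I R V" "W \<in> equivs_uniformity I R V"
  then obtain i j where "i \<in> I" "j \<in> I" "R i \<subseteq> U" "R j \<subseteq> W" "U \<subseteq> V \<times> V"
    by (auto simp: equivs_uniformity_def)
  moreover obtain k where "k \<in> I" "R k \<subseteq> R i \<inter> R j" using equivs_lower_bound \<open>i \<in> I\<close> \<open>j \<in> I\<close> by blast
  ultimately show "U \<inter> W \<in> equivs_uniformity I R V"
    unfolding equivs_uniformity_def by blast
qed

lemma compatible_equivs_uniformity:
  "compatible_uniformity (equivs_topology I R V) (equivs_uniformity I R V)"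
  unfolding compatible_uniformity_def topspace_equivs_topology openin_equivs_topology
proof (intro conjI allI uniformity_on_equivs_uniformity)
  have "(\<exists>U\<in>equivs_uniformity I R V. U `` {x} \<subseteq> S) \<longleftrightarrow> (\<exists>i\<in>I. R i `` {x} \<subseteq> S)" for S x
  proof
    assume "\<exists>U\<in>equivs_uniformity I R V. U `` {x} \<subseteq> S"
    then show "\<exists>i\<in>I. R i `` {x} \<subseteq> S" unfolding equivs_uniformity_def by blast
  next
    assume "\<exists>i\<in>I. R i `` {x} \<subseteq> S"
    then obtain i where "i \<in> I" "R i `` {x} \<subseteq> S" by blast
    moreover have "R i \<in> equivs_uniformity I R V"
      using \<open>i \<in> I\<close> equivs_subset unfolding equivs_uniformity_def by blast
    ultimately show "\<exists>U\<in>equivs_uniformity I R V. U `` {x} \<subseteq> S" by blast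
  qed
  then show "(S \<subseteq> V \<and> (\<forall>x\<in>S. \<exists>i\<in>I. R i `` {x} \<subseteq> S)) \<longleftrightarrow>
      (S \<subseteq> V \<and> (\<forall>x\<in>S. \<exists>U\<in>equivs_uniformity I R V. U `` {x} \<subseteq> S))" for S
    by blast
qed

end

lemma compatible_uniformity_nbhd:
  assumes comp: "compatible_uniformity X \<V>" and "V \<in> \<V>" "x \<in> topspace X"
  shows "\<exists>S. openin X S \<and> x \<in> S \<and> S \<subseteq> V `` {x}"
proof -
  have unif: "uniformity_on (topspace X) \<V>"
    and opn: "\<And>S. openin X S \<longleftrightarrow> S \<subseteq> topspace X \<and> (\<forall>y\<in>S. \<exists>U\<in>\<V>. U `` {y} \<subseteq> S)"
    using comp by (simp_all add: compatible_uniformity_def)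
  have refl: "Id_on (topspace X) \<subseteq> U" and into: "U \<subseteq> topspace X \<times> topspace X"
    and half: "\<exists>W\<in>\<V>. W O W \<subseteq> U" if "U \<in> \<V>" for U
    using unif that unfolding uniformity_on_def by blast+
  define S where "S = {y \<in> topspace X. \<exists>U\<in>\<V>. U `` {y} \<subseteq> V `` {x}}"
  have "openin X S"
    unfolding opn
  proof (intro conjI ballI)
    show "S \<subseteq> topspace X" by (auto simp: S_def)
    fix y assume "y \<in> S"
    then obtain U where U: "U \<in> \<V>" "U `` {y} \<subseteq> V `` {x}" by (auto simp: S_def)
    obtain W where W: "W \<in> \<V>" "W O W \<subseteq> U" using half[OF U(1)] by blast
    have "W `` {z} \<subseteq> V `` {x}" if "z \<in> W `` {y}" for z
      using that W(2) U(2) by blast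
    then have "W `` {y} \<subseteq> S" using into[OF W(1)] W(1) by (auto simp: S_def)
    then show "\<exists>U\<in>\<V>. U `` {y} \<subseteq> S" using W(1) by blast
  qed
  moreover have "x \<in> S" using assms(2,3) by (auto simp: S_def)
  moreover have "S \<subseteq> V `` {x}" using refl by (force simp: S_def)
  ultimately show ?thesis by blast
qed

section \<open>The space \<open>Y\<^sub>P\<close>\<close>

text \<open>All witnessing spaces live in \<open>'a univ\<close>: an element \<open>p\<close> is coded by \<open>atom p\<close>, a subset of
  \<open>P\<close> by the set of its atoms. In \<open>Y\<^sub>P\<close> the points of \<open>P\<close> are the singletons \<open>pt p\<close> and the point
  at infinity is \<open>{}\<close>.\<close>

definition atom :: "'a \<Rightarrow> ('a \<times> nat) set set" where
  "atom p = {{(p, 0)}}"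

definition pt :: "'a \<Rightarrow> 'a univ" where
  "pt p = {atom p}"

lemma atom_eq_iff [simp]: "atom p = atom q \<longleftrightarrow> p = q"
  by (auto simp: atom_def)

lemma pt_eq_iff [simp]: "pt p = pt q \<longleftrightarrow> p = q"
  by (auto simp: pt_def)

lemma pt_nonempty [simp]: "pt p \<noteq> {}"
  by (simp add: pt_def)

definition Y_points :: "'a set \<Rightarrow> 'a univ set" where
  "Y_points P = insert {} (pt ` P)"

definition Y_tail :: "'a set \<Rightarrow> ('a \<Rightarrow> 'a \<Rightarrow> bool) \<Rightarrow> 'a \<Rightarrow> 'a univ set" where
  "Y_tail P leq p = insert {} (pt ` (P - down_set P leq p))"

definition Y_entourage :: "'a set \<Rightarrow> ('a \<Rightarrow> 'a \<Rightarrow> bool) \<Rightarrow> 'a \<Rightarrow> 'a univ rel" where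
  "Y_entourage P leq p = Id_on (Y_points P) \<union> Y_tail P leq p \<times> Y_tail P leq p"

definition Y_space :: "'a set \<Rightarrow> ('a \<Rightarrow> 'a \<Rightarrow> bool) \<Rightarrow> 'a univ topology" where
  "Y_space P leq = equivs_topology P (Y_entourage P leq) (Y_points P)"

definition Y_uniformity :: "'a set \<Rightarrow> ('a \<Rightarrow> 'a \<Rightarrow> bool) \<Rightarrow> 'a univ rel set" where
  "Y_uniformity P leq = equivs_uniformity P (Y_entourage P leq) (Y_points P)"

lemma Y_tail_subset: "Y_tail P leq p \<subseteq> Y_points P"
  by (auto simp: Y_tail_def Y_points_def)

lemma pt_notin_Y_tail: "directed_set P leq \<Longrightarrow> p \<in> P \<Longrightarrow> pt p \<notin> Y_tail P leq p"
  by (auto simp: Y_tail_def self_in_down_set)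

lemma Y_entourage_subset_iff:
  assumes dir: "directed_set P leq" and "p \<in> P" "p' \<in> P"
  shows "Y_entourage P leq p' \<subseteq> Y_entourage P leq p \<longleftrightarrow> leq p p'"
proof
  assume "leq p p'"
  then have "Y_tail P leq p' \<subseteq> Y_tail P leq p"
    using down_set_mono[OF dir assms(2,3)] by (auto simp: Y_tail_def)
  then show "Y_entourage P leq p' \<subseteq> Y_entourage P leq p" by (auto simp: Y_entourage_def)
next
  assume sub: "Y_entourage P leq p' \<subseteq> Y_entourage P leq p"
  show "leq p p'"
  proof (rule ccontr)
    assume "\<not> leq p p'"
    then have "({}, pt p) \<in> Y_entourage P leq p'"
      using assms(2) by (auto simp: Y_entourage_def Y_tail_def down_set_def)
    then have "pt p \<in> Y_tail P leq p" using sub by (auto simp: Y_entourage_def)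
    then show False using pt_notin_Y_tail[OF dir assms(2)] by blast
  qed
qed

lemma directed_equivs_Y_entourage:
  assumes dir: "directed_set P leq"
  shows "directed_equivs P (Y_entourage P leq) (Y_points P)"
  unfolding directed_equivs_def
proof (intro conjI ballI)
  show "P \<noteq> {}" using directed_set_nonempty[OF dir] .
  fix p assume "p \<in> P"
  show "equiv (Y_points P) (Y_entourage P leq p)"
    using Y_tail_subset[of P leq p]
    by (auto simp: Y_entourage_def equiv_def refl_on_def sym_def trans_def)
  fix p' assume "p' \<in> P"
  then obtain r where "r \<in> P" "leq p r" "leq p' r"
    using directed_set_upper_bound[OF dir \<open>p \<in> P\<close>] by blast
  then show "\<exists>r\<in>P. Y_entourage P leq r \<subseteq> Y_entourage P leq p \<inter> Y_entourage P leq p'"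
    using Y_entourage_subset_iff[OF dir] \<open>p \<in> P\<close> \<open>p' \<in> P\<close> by blast
qed

lemma topspace_Y_space: "directed_set P leq \<Longrightarrow> topspace (Y_space P leq) = Y_points P"
  by (simp add: Y_space_def topspace_equivs_topology[OF directed_equivs_Y_entourage])

lemma tychonoff_Y_space:
  assumes dir: "directed_set P leq"
  shows "tychonoff_space (Y_space P leq)"
  unfolding Y_space_def
proof (rule tychonoff_equivs_topology[OF directed_equivs_Y_entourage[OF dir]])
  fix x y assume "x \<in> Y_points P" "y \<in> Y_points P" "x \<noteq> y"
  then obtain q where "q \<in> P" "x = pt q \<or> y = pt q" by (auto simp: Y_points_def)
  then show "\<exists>p\<in>P. (x, y) \<notin> Y_entourage P leq p"
    using pt_notin_Y_tail[OF dir] \<open>x \<noteq> y\<close> by (auto simp: Y_entourage_def)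
qed

lemma Y_tail_subset_open:
  assumes dir: "directed_set P leq" and "openin (Y_space P leq) U" "{} \<in> U"
  shows "\<exists>p\<in>P. Y_tail P leq p \<subseteq> U"
proof -
  have "Y_tail P leq p \<subseteq> Y_entourage P leq p `` {{}}" for p
    by (auto simp: Y_entourage_def Y_tail_def)
  then show ?thesis
    using assms(2,3) unfolding Y_space_def openin_equivs_topology[OF directed_equivs_Y_entourage[OF dir]]
    by blast
qed

theorem tukey_eq_nbhds_diagonal_Y_space:
  assumes dir: "directed_set P leq"
  shows "tukey_eq P leq (nbhds (prod_topology (Y_space P leq) (Y_space P leq)) (diagonal (Y_space P leq))) rev_incl"
proof (rule tukey_eq_if_cofinal_embedding[OF _ _ _ transp_on_rev_incl])
  let ?Y = "Y_space P leq"
  have diag: "diagonal ?Y = Id_on (Y_points P)" by (auto simp: diagonal_def topspace_Y_space[OF dir])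
  have "openin (prod_topology ?Y ?Y) (Y_entourage P leq p)" if "p \<in> P" for p
    unfolding Y_space_def
    using openin_prod_equivs_topology_relation[OF directed_equivs_Y_entourage[OF dir] that] .
  then show "Y_entourage P leq ` P \<subseteq> nbhds (prod_topology ?Y ?Y) (diagonal ?Y)"
    by (auto simp: nbhds_def diag Y_entourage_def)
  show "rev_incl (Y_entourage P leq p) (Y_entourage P leq p') \<longleftrightarrow> leq p p'" if "p \<in> P" "p' \<in> P" for p p'
    using Y_entourage_subset_iff[OF dir that] by (simp add: rev_incl_def)
  show "\<exists>p\<in>P. rev_incl N (Y_entourage P leq p)" if N: "N \<in> nbhds (prod_topology ?Y ?Y) (diagonal ?Y)" for N
  proof -
    have "({}, {}) \<in> N" using N by (auto simp: nbhds_def diag Y_points_def)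
    then obtain U V where UV: "openin ?Y U" "openin ?Y V" "{} \<in> U" "{} \<in> V" "U \<times> V \<subseteq> N"
      using N unfolding nbhds_def openin_prod_topology_alt by blast
    then obtain p where "p \<in> P" "Y_tail P leq p \<subseteq> U \<inter> V"
      using Y_tail_subset_open[OF dir openin_Int[OF UV(1,2)]] UV(3,4) by blast
    then have "Y_entourage P leq p \<subseteq> N" using UV N by (auto simp: Y_entourage_def nbhds_def diag)
    then show ?thesis using \<open>p \<in> P\<close> by (auto simp: rev_incl_def)
  qed
qed

theorem universal_uniformity_Y_space:
  assumes dir: "directed_set P leq"
  shows "universal_uniformity (Y_space P leq) (Y_uniformity P leq)"
  unfolding universal_uniformity_def
proof (intro conjI allI impI subsetI)
  show "compatible_uniformity (Y_space P leq) (Y_uniformity P leq)"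
    unfolding Y_space_def Y_uniformity_def
    by (rule compatible_equivs_uniformity[OF directed_equivs_Y_entourage[OF dir]])
  fix \<V> V assume comp: "compatible_uniformity (Y_space P leq) \<V>" and V: "V \<in> \<V>"
  have unif: "uniformity_on (Y_points P) \<V>"
    using comp by (simp add: compatible_uniformity_def topspace_Y_space[OF dir])
  have into: "V \<subseteq> Y_points P \<times> Y_points P" and refl: "Id_on (Y_points P) \<subseteq> V"
    using unif V unfolding uniformity_on_def by blast+
  obtain W where W: "W \<in> \<V>" "W O W \<subseteq> V" using unif V unfolding uniformity_on_def by meson
  have "W\<inverse> \<in> \<V>" using unif W(1) unfolding uniformity_on_def by blast
  then have "W \<inter> W\<inverse> \<in> \<V>" using unif W(1) unfolding uniformity_on_def by blast
  then obtain S where S: "openin (Y_space P leq) S" "{} \<in> S" "S \<subseteq> (W \<inter> W\<inverse>) `` {{}}"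
    using compatible_uniformity_nbhd[OF comp] by (metis Y_points_def insertI1 topspace_Y_space[OF dir])
  obtain p where p: "p \<in> P" "Y_tail P leq p \<subseteq> S" using Y_tail_subset_open[OF dir S(1,2)] by blast
  txt \<open>Any two points of the tail are \<open>W\<close>-close to \<open>{}\<close> in both directions, hence \<open>W O W\<close>-close.\<close>
  have "Y_tail P leq p \<times> Y_tail P leq p \<subseteq> W O W" using p(2) S(3) by blast
  then have "Y_entourage P leq p \<subseteq> V" using W(2) refl by (auto simp: Y_entourage_def)
  then show "V \<in> Y_uniformity P leq"
    using p(1) into by (auto simp: Y_uniformity_def equivs_uniformity_def)
qed

theorem tukey_eq_Y_uniformity:
  assumes dir: "directed_set P leq"
  shows "tukey_eq P leq (Y_uniformity P leq) rev_incl"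
proof (rule tukey_eq_if_cofinal_embedding[OF _ _ _ transp_on_rev_incl])
  show "Y_entourage P leq ` P \<subseteq> Y_uniformity P leq"
    using Y_tail_subset by (fastforce simp: Y_uniformity_def equivs_uniformity_def Y_entourage_def)
  show "rev_incl (Y_entourage P leq p) (Y_entourage P leq p') \<longleftrightarrow> leq p p'" if "p \<in> P" "p' \<in> P" for p p'
    using Y_entourage_subset_iff[OF dir that] by (simp add: rev_incl_def)
  show "\<exists>p\<in>P. rev_incl U (Y_entourage P leq p)" if "U \<in> Y_uniformity P leq" for U
    using that by (auto simp: Y_uniformity_def equivs_uniformity_def rev_incl_def)
qed

section \<open>The topological group \<open>G\<^sub>P\<close>\<close>

definition G_carrier :: "'a set \<Rightarrow> 'a univ set" where
  "G_carrier P = {A. finite A \<and> A \<subseteq> atom ` P}"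

definition G_group :: "'a set \<Rightarrow> 'a univ monoid" where
  "G_group P = \<lparr>carrier = G_carrier P, mult = \<lambda>A B. (A - B) \<union> (B - A), one = {}\<rparr>"

definition G_relation :: "'a set \<Rightarrow> ('a \<Rightarrow> 'a \<Rightarrow> bool) \<Rightarrow> 'a \<Rightarrow> 'a univ rel" where
  "G_relation P leq p = {(A, B). A \<in> G_carrier P \<and> B \<in> G_carrier P \<and>
     A \<inter> atom ` down_set P leq p = B \<inter> atom ` down_set P leq p}"

definition G_space :: "'a set \<Rightarrow> ('a \<Rightarrow> 'a \<Rightarrow> bool) \<Rightarrow> 'a univ topology" where
  "G_space P leq = equivs_topology P (G_relation P leq) (G_carrier P)"

lemma G_group_simps [simp]:
  "carrier (G_group P) = G_carrier P"
  "A \<otimes>\<^bsub>G_group P\<^esub> B = (A - B) \<union> (B - A)"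
  "\<one>\<^bsub>G_group P\<^esub> = {}"
  by (simp_all add: G_group_def)

lemma group_G_group: "group (G_group P)"
proof (rule groupI)
  show "A \<otimes>\<^bsub>G_group P\<^esub> B \<in> carrier (G_group P)"
    if "A \<in> carrier (G_group P)" "B \<in> carrier (G_group P)" for A B
    using that by (auto simp: G_carrier_def)
  show "\<exists>B\<in>carrier (G_group P). B \<otimes>\<^bsub>G_group P\<^esub> A = \<one>\<^bsub>G_group P\<^esub>"
    if "A \<in> carrier (G_group P)" for A
    using that by auto
qed (auto simp: G_carrier_def)

lemma inv_G_group: "A \<in> G_carrier P \<Longrightarrow> inv\<^bsub>G_group P\<^esub> A = A"
  by (rule group.inv_equality[OF group_G_group]) auto

lemma directed_equivs_G_relation:
  assumes dir: "directed_set P leq"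
  shows "directed_equivs P (G_relation P leq) (G_carrier P)"
  unfolding directed_equivs_def
proof (intro conjI ballI)
  show "P \<noteq> {}" using directed_set_nonempty[OF dir] .
  fix p assume p: "p \<in> P"
  show "equiv (G_carrier P) (G_relation P leq p)"
    by (auto simp: G_relation_def equiv_def refl_on_def sym_def trans_def)
  fix p' assume p': "p' \<in> P"
  then obtain r where r: "r \<in> P" "leq p r" "leq p' r"
    using directed_set_upper_bound[OF dir p] by blast
  have "down_set P leq p \<subseteq> down_set P leq r" "down_set P leq p' \<subseteq> down_set P leq r"
    using down_set_mono[OF dir] p p' r by blast+
  then have "G_relation P leq r \<subseteq> G_relation P leq p \<inter> G_relation P leq p'"
    unfolding G_relation_def by blast
  then show "\<exists>r\<in>P. G_relation P leq r \<subseteq> G_relation P leq p \<inter> G_relation P leq p'"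
    using r(1) by blast
qed

lemma topspace_G_space: "directed_set P leq \<Longrightarrow> topspace (G_space P leq) = G_carrier P"
  by (simp add: G_space_def topspace_equivs_topology[OF directed_equivs_G_relation])

lemma topological_group_G:
  assumes dir: "directed_set P leq"
  shows "topological_group (G_group P) (G_space P leq)"
  unfolding topological_group_def
proof (intro conjI group_G_group)
  let ?G = "G_space P leq"
  note equivs = directed_equivs_G_relation[OF dir]
  show "topspace ?G = carrier (G_group P)" by (simp add: topspace_G_space[OF dir])
  show "continuous_map (prod_topology ?G ?G) ?G (\<lambda>(A, B). A \<otimes>\<^bsub>G_group P\<^esub> B)"
  proof (rule continuous_map_into_equivs_topology[OF equivs, folded G_space_def])
    show "(\<lambda>(A, B). A \<otimes>\<^bsub>G_group P\<^esub> B) \<in> topspace (prod_topology ?G ?G) \<rightarrow> G_carrier P"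
      using topspace_G_space[OF dir] by (auto simp: G_carrier_def)
    fix AB p assume AB: "AB \<in> topspace (prod_topology ?G ?G)" and p: "p \<in> P"
    obtain A B where AB_eq: "AB = (A, B)" by fastforce
    let ?U = "G_relation P leq p `` {A} \<times> G_relation P leq p `` {B}"
    have "openin (prod_topology ?G ?G) ?U"
      unfolding G_space_def
      by (intro openin_prod_Times_iff[THEN iffD2] disjI2 conjI openin_equivs_topology_class[OF equivs p])
    moreover have "AB \<in> ?U"
      using AB equivs_refl[OF equivs p] by (auto simp: AB_eq topspace_G_space[OF dir])
    moreover have "((\<lambda>(A, B). A \<otimes>\<^bsub>G_group P\<^esub> B) AB, (\<lambda>(A, B). A \<otimes>\<^bsub>G_group P\<^esub> B) AB') \<in> G_relation P leq p"
      if "AB' \<in> ?U" for AB'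
      using that unfolding AB_eq G_relation_def G_carrier_def by auto
    ultimately show "\<exists>U. openin (prod_topology ?G ?G) U \<and> AB \<in> U \<and>
        (\<forall>AB'\<in>U. ((\<lambda>(A, B). A \<otimes>\<^bsub>G_group P\<^esub> B) AB, (\<lambda>(A, B). A \<otimes>\<^bsub>G_group P\<^esub> B) AB') \<in> G_relation P leq p)"
      by blast
  qed
  show "continuous_map ?G ?G (\<lambda>A. inv\<^bsub>G_group P\<^esub> A)"
    by (rule continuous_map_eq[OF continuous_map_id]) (simp add: inv_G_group topspace_G_space[OF dir])
qed

lemma tychonoff_G_space:
  assumes dir: "directed_set P leq"
  shows "tychonoff_space (G_space P leq)"
  unfolding G_space_def
proof (rule tychonoff_equivs_topology[OF directed_equivs_G_relation[OF dir]])
  fix A B assume AB: "A \<in> G_carrier P" "B \<in> G_carrier P" "A \<noteq> B"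
  then obtain a where a: "a \<in> (A - B) \<union> (B - A)" by blast
  then obtain q where q: "q \<in> P" "a = atom q" using AB(1,2) by (auto simp: G_carrier_def)
  then have "atom q \<in> atom ` down_set P leq q" using self_in_down_set[OF dir] by blast
  then have "(A, B) \<notin> G_relation P leq q" using a q by (auto simp: G_relation_def)
  then show "\<exists>p\<in>P. (A, B) \<notin> G_relation P leq p" using q(1) by blast
qed

theorem tukey_eq_nbhds_G:
  assumes dir: "directed_set P leq"
  shows "tukey_eq P leq (nbhds (G_space P leq) {\<one>\<^bsub>G_group P\<^esub>}) rev_incl"
  unfolding G_group_simps G_space_def
proof (rule tukey_eq_nbhds_equivs_topology[OF directed_equivs_G_relation[OF dir]])
  show "{} \<in> G_carrier P" by (simp add: G_carrier_def)
  have identity_class: "G_relation P leq p `` {{}} = {B \<in> G_carrier P. B \<inter> atom ` down_set P leq p = {}}" for p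
    by (auto simp: G_relation_def G_carrier_def)
  fix p p' assume p: "p \<in> P" and p': "p' \<in> P"
  show "G_relation P leq p' `` {{}} \<subseteq> G_relation P leq p `` {{}} \<longleftrightarrow> leq p p'"
  proof
    assume sub: "G_relation P leq p' `` {{}} \<subseteq> G_relation P leq p `` {{}}"
    show "leq p p'"
    proof (rule ccontr)
      assume "\<not> leq p p'"
      then have "{atom p} \<in> G_relation P leq p' `` {{}}"
        using p by (auto simp: identity_class G_carrier_def down_set_def)
      then have "{atom p} \<in> G_relation P leq p `` {{}}" using sub by blast
      then show False using self_in_down_set[OF dir p] by (auto simp: identity_class)
    qed
  next
    assume "leq p p'"
    then show "G_relation P leq p' `` {{}} \<subseteq> G_relation P leq p `` {{}}"
      using down_set_mono[OF dir p p'] by (auto simp: identity_class)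
  qed
qed

section \<open>The compact space \<open>K\<^sub>P\<close>\<close>

lemma ex_homeomorphic_copy:
  assumes "inj_on f (topspace X)"
  obtains Y where "homeomorphic_map X Y f"
proof
  define g where "g = inv_into (topspace X) f"
  define Y where "Y = pullback_topology (f ` topspace X) g X"
  have gf: "\<And>x. x \<in> topspace X \<Longrightarrow> g (f x) = x" using assms by (simp add: g_def)
  have "homeomorphic_maps X Y f g"
    unfolding homeomorphic_maps_def
  proof (intro conjI ballI)
    have "continuous_map X X (g \<circ> f)"
      by (rule continuous_map_eq[OF continuous_map_id]) (simp add: gf)
    then show "continuous_map X Y f"
      unfolding Y_def by (rule continuous_map_pullback') auto
    show "continuous_map Y X g"
      using continuous_map_pullback[OF continuous_map_id] by (simp add: Y_def)
    show "g (f x) = x" if "x \<in> topspace X" for x using gf[OF that] .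
    show "f (g y) = y" if "y \<in> topspace Y" for y
      using that gf by (auto simp: Y_def topspace_pullback_topology g_def f_inv_into_f)
  qed
  then show "homeomorphic_map X Y f" using homeomorphic_maps_map by blast
qed

lemma tukey_eq_nbhds_homeomorphic_map:
  assumes hom: "homeomorphic_map X Y h" and x: "x \<in> topspace X"
  shows "tukey_eq (nbhds X {x}) rev_incl (nbhds Y {h x}) rev_incl"
proof (rule tukey_eq_if_cofinal_embedding[OF _ _ _ transp_on_rev_incl])
  show "(\<lambda>U. h ` U) ` nbhds X {x} \<subseteq> nbhds Y {h x}"
    using homeomorphic_map_openness_eq[OF hom] by (auto simp: nbhds_def)
  show "rev_incl (h ` U) (h ` U') \<longleftrightarrow> rev_incl U U'" if "U \<in> nbhds X {x}" "U' \<in> nbhds X {x}" for U U'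
  proof -
    have "U \<subseteq> topspace X" "U' \<subseteq> topspace X" using that by (auto simp: nbhds_def dest: openin_subset)
    then show ?thesis
      using inj_on_image_subset_iff[OF homeomorphic_imp_injective_map[OF hom]] by (simp add: rev_incl_def)
  qed
  show "\<exists>U\<in>nbhds X {x}. rev_incl N (h ` U)" if "N \<in> nbhds Y {h x}" for N
  proof
    show "{z \<in> topspace X. h z \<in> N} \<in> nbhds X {x}"
      using that x openin_continuous_map_preimage[OF homeomorphic_imp_continuous_map[OF hom]]
      by (auto simp: nbhds_def)
  qed (auto simp: rev_incl_def)
qed

text \<open>In a compact Hausdorff space, complementation is an order isomorphism between the compact
  sets missing \<open>x\<close> and the open neighbourhoods of \<open>x\<close>.\<close>
lemma tukey_eq_compact_sets_punctured:
  assumes K: "compact_space K" "Hausdorff_space K" and x: "x \<in> topspace K"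
  shows "tukey_eq (compact_sets (subtopology K (topspace K - {x}))) (\<subseteq>) (nbhds K {x}) rev_incl"
proof (rule tukey_eq_if_cofinal_embedding[OF _ _ _ transp_on_rev_incl])
  have compact_sets: "compact_sets (subtopology K (topspace K - {x})) = {C. closedin K C \<and> x \<notin> C}"
    using closedin_compact_space[OF K(1)] compactin_imp_closedin[OF K(2)]
    by (auto simp: compact_sets_def compactin_subtopology dest: closedin_subset)
  show "(\<lambda>C. topspace K - C) ` compact_sets (subtopology K (topspace K - {x})) \<subseteq> nbhds K {x}"
    using x by (auto simp: compact_sets nbhds_def closedin_def)
  show "rev_incl (topspace K - C) (topspace K - C') \<longleftrightarrow> C \<subseteq> C'"
    if "C \<in> compact_sets (subtopology K (topspace K - {x}))"
      "C' \<in> compact_sets (subtopology K (topspace K - {x}))" for C C'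
    using that closedin_subset by (auto simp: compact_sets rev_incl_def)
  show "\<exists>C\<in>compact_sets (subtopology K (topspace K - {x})). rev_incl N (topspace K - C)"
    if "N \<in> nbhds K {x}" for N
  proof
    show "topspace K - N \<in> compact_sets (subtopology K (topspace K - {x}))"
      using that by (auto simp: compact_sets nbhds_def)
  qed (use that openin_subset in \<open>auto simp: rev_incl_def nbhds_def\<close>)
qed

lemma locally_compact_space_punctured:
  assumes "compact_space K" "Hausdorff_space K"
  shows "locally_compact_space (subtopology K (topspace K - {x}))"
proof (rule locally_compact_space_open_subset)
  show "openin K (topspace K - {x})"
    using Hausdorff_imp_t1_space[OF assms(2)] by (simp add: t1_space_openin_delete_alt)
qed (use assms compact_imp_locally_compact_space in auto)

lemma tychonoff_space_subtopology: "tychonoff_space X \<Longrightarrow> tychonoff_space (subtopology X S)"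
  by (simp add: tychonoff_space_def t1_space_subtopology completely_regular_space_subtopology)

lemma tychonoff_if_compact_Hausdorff:
  "compact_space K \<Longrightarrow> Hausdorff_space K \<Longrightarrow> tychonoff_space K"
  unfolding tychonoff_space_def
  using Hausdorff_imp_t1_space compact_Hausdorff_or_regular_imp_normal_space
    normal_imp_completely_regular_space by blast

definition up_sets :: "'a set \<Rightarrow> ('a \<Rightarrow> 'a \<Rightarrow> bool) \<Rightarrow> ('a \<Rightarrow> bool) set" where
  "up_sets P leq = {f \<in> P \<rightarrow>\<^sub>E UNIV. \<forall>p\<in>P. \<forall>q\<in>P. leq p q \<longrightarrow> f p \<longrightarrow> f q}"

definition cantor_cube :: "'a set \<Rightarrow> ('a \<Rightarrow> bool) topology" where
  "cantor_cube P = product_topology (\<lambda>_. discrete_topology UNIV) P"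

definition up_set_space :: "'a set \<Rightarrow> ('a \<Rightarrow> 'a \<Rightarrow> bool) \<Rightarrow> ('a \<Rightarrow> bool) topology" where
  "up_set_space P leq = subtopology (cantor_cube P) (up_sets P leq)"

lemma topspace_cantor_cube: "topspace (cantor_cube P) = P \<rightarrow>\<^sub>E UNIV"
  by (simp add: cantor_cube_def)

lemma topspace_up_set_space: "topspace (up_set_space P leq) = up_sets P leq"
  by (auto simp: up_set_space_def topspace_cantor_cube up_sets_def)

lemma closedin_up_sets: "closedin (cantor_cube P) (up_sets P leq)"
proof -
  have coordinate_closed: "closedin (cantor_cube P) {f \<in> topspace (cantor_cube P). f p \<in> S}" if "p \<in> P" for p S
    unfolding cantor_cube_def
    by (rule closedin_continuous_map_preimage[OF continuous_map_product_projection[OF that]]) simp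
  let ?C = "\<lambda>(p, q). {f \<in> topspace (cantor_cube P). \<not> f p} \<union> {f \<in> topspace (cantor_cube P). f q}"
  have eq: "up_sets P leq = \<Inter>(insert (topspace (cantor_cube P)) (?C ` {(p, q). p \<in> P \<and> q \<in> P \<and> leq p q}))"
    by (auto simp: up_sets_def topspace_cantor_cube)
  have "closedin (cantor_cube P) (?C (p, q))" if "p \<in> P" "q \<in> P" for p q
    using coordinate_closed[OF that(1), of "{False}"] coordinate_closed[OF that(2), of "{True}"]
    by (simp add: closedin_Un)
  then have "closedin (cantor_cube P) (\<Inter>(insert (topspace (cantor_cube P)) (?C ` {(p, q). p \<in> P \<and> q \<in> P \<and> leq p q})))"
    by (intro closedin_Inter) auto
  then show ?thesis unfolding eq .
qed

lemma compact_space_up_set_space: "compact_space (up_set_space P leq)"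
  unfolding up_set_space_def
  by (intro compact_space_subtopology closedin_compact_space closedin_up_sets)
    (simp add: cantor_cube_def compact_space_product_topology compact_space_discrete_topology)

lemma Hausdorff_space_up_set_space: "Hausdorff_space (up_set_space P leq)"
  unfolding up_set_space_def cantor_cube_def
  by (intro Hausdorff_space_subtopology) (simp add: Hausdorff_space_product_topology)

lemma tukey_eq_nbhds_up_set_space:
  assumes dir: "directed_set P leq"
  shows "tukey_eq P leq (nbhds (up_set_space P leq) {restrict (\<lambda>_. False) P}) rev_incl"
proof (rule tukey_eq_if_cofinal_embedding[OF _ _ _ transp_on_rev_incl])
  let ?e = "restrict (\<lambda>_. False) P"
  let ?B = "\<lambda>p. {f \<in> up_sets P leq. \<not> f p}"
  have e: "?e \<in> up_sets P leq" by (auto simp: up_sets_def)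
  show "?B ` P \<subseteq> nbhds (up_set_space P leq) {?e}"
  proof clarify
    fix p assume p: "p \<in> P"
    have "openin (cantor_cube P) {f \<in> topspace (cantor_cube P). f p \<in> {False}}"
      unfolding cantor_cube_def
      by (rule openin_continuous_map_preimage[OF continuous_map_product_projection[OF p]]) simp
    moreover have "?B p = {f \<in> topspace (cantor_cube P). f p \<in> {False}} \<inter> up_sets P leq"
      by (auto simp: up_sets_def topspace_cantor_cube)
    ultimately have "openin (up_set_space P leq) (?B p)"
      unfolding up_set_space_def openin_subtopology by blast
    moreover have "?e \<in> ?B p" using e p by simp
    ultimately show "?B p \<in> nbhds (up_set_space P leq) {?e}" by (simp add: nbhds_def)
  qed
  show "rev_incl (?B p) (?B p') \<longleftrightarrow> leq p p'" if p: "p \<in> P" "p' \<in> P" for p p'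
  proof
    assume "leq p p'"
    then show "rev_incl (?B p) (?B p')" using p by (auto simp: rev_incl_def up_sets_def)
  next
    assume sub: "rev_incl (?B p) (?B p')"
    define f where "f = restrict (\<lambda>q. \<not> leq q p') P"
    have "f \<in> up_sets P leq"
      unfolding up_sets_def f_def using directed_set_trans[OF dir _ _ p(2)] by auto
    then have "f \<in> ?B p'" using directed_set_refl[OF dir p(2)] p by (simp add: f_def)
    then have "f \<in> ?B p" using sub by (auto simp: rev_incl_def)
    then show "leq p p'" using p by (simp add: f_def)
  qed
  show "\<exists>p\<in>P. rev_incl N (?B p)" if N: "N \<in> nbhds (up_set_space P leq) {?e}" for N
  proof -
    obtain U where U: "openin (cantor_cube P) U" "N = U \<inter> up_sets P leq"
      using N unfolding nbhds_def up_set_space_def openin_subtopology by blast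
    have "?e \<in> U" using N U(2) by (simp add: nbhds_def)
    obtain V where V: "finite {i \<in> P. V i \<noteq> UNIV}" "?e \<in> PiE P V" "PiE P V \<subseteq> U"
      using U(1) \<open>?e \<in> U\<close> unfolding cantor_cube_def openin_product_topology_alt by auto
    obtain r where r: "r \<in> P" "\<forall>i\<in>{i \<in> P. V i \<noteq> UNIV}. leq i r"
      using directed_set_finite_upper_bound[OF dir V(1)] by blast
    have "f \<in> PiE P V" if f: "f \<in> ?B r" for f
    proof (rule PiE_I)
      fix i assume i: "i \<in> P"
      show "f i \<in> V i"
      proof (cases "V i = UNIV")
        case False
        then have "\<not> f i" using f i r by (auto simp: up_sets_def)
        then show ?thesis using V(2) i by (auto simp: PiE_iff)
      qed simp
    qed (use f in \<open>auto simp: up_sets_def PiE_def extensional_def\<close>)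
    then have "?B r \<subseteq> N" using U(2) V(3) by blast
    then show ?thesis using r(1) by (auto simp: rev_incl_def)
  qed
qed

theorem compact_space_tukey_eq_nbhds:
  fixes P :: "'a set"
  assumes dir: "directed_set P leq"
  obtains K :: "'a univ topology" and x
  where "compact_space K" "Hausdorff_space K" "x \<in> topspace K"
    "tukey_eq P leq (nbhds K {x}) rev_incl"
proof -
  let ?code = "\<lambda>f. atom ` {p \<in> P. f p}"
  have "inj_on ?code (up_sets P leq)"
  proof (rule inj_onI)
    fix f g assume f: "f \<in> up_sets P leq" and g: "g \<in> up_sets P leq" and eq: "?code f = ?code g"
    have "f p \<longleftrightarrow> g p" if "p \<in> P" for p
    proof -
      have "f p \<longleftrightarrow> atom p \<in> ?code f" using that by auto
      also have "\<dots> \<longleftrightarrow> g p" using that by (auto simp: eq)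
      finally show ?thesis .
    qed
    then show "f = g" using f g by (auto simp: up_sets_def intro: PiE_ext)
  qed
  then obtain K where hom: "homeomorphic_map (up_set_space P leq) K ?code"
    using ex_homeomorphic_copy by (metis topspace_up_set_space)
  let ?e = "restrict (\<lambda>_. False) P"
  have e: "?e \<in> topspace (up_set_space P leq)" by (auto simp: topspace_up_set_space up_sets_def)
  have "up_set_space P leq homeomorphic_space K"
    using hom homeomorphic_map_imp_homeomorphic_space by blast
  then have "compact_space K" "Hausdorff_space K"
    using compact_space_up_set_space Hausdorff_space_up_set_space
      homeomorphic_compact_space homeomorphic_Hausdorff_space by blast+
  moreover have "?code ?e \<in> topspace K"
    using e hom homeomorphic_imp_surjective_map by blast
  moreover have "tukey_eq P leq (nbhds K {?code ?e}) rev_incl"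
    using tukey_eq_trans[OF tukey_eq_nbhds_up_set_space[OF dir] tukey_eq_nbhds_homeomorphic_map[OF hom e]] .
  ultimately show ?thesis by (rule that)
qed

section \<open>The locally convex space \<open>L\<^sub>P\<close>\<close>

definition l1_on :: "'b set \<Rightarrow> ('b \<Rightarrow> real) \<Rightarrow> real" where
  "l1_on D f = (\<Sum>x\<in>support_on D f. \<bar>f x\<bar>)"

lemma l1_on_nonneg: "0 \<le> l1_on D f"
  by (simp add: l1_on_def sum_nonneg)

lemma l1_on_eq_sum:
  assumes "finite F" "support_on UNIV f \<subseteq> F"
  shows "l1_on D f = (\<Sum>x\<in>D \<inter> F. \<bar>f x\<bar>)"
  unfolding l1_on_def
  by (rule sum.mono_neutral_left) (use assms in \<open>auto simp: support_on_def\<close>)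

lemma l1_on_add_le:
  assumes "finite (support_on UNIV f)" "finite (support_on UNIV g)"
  shows "l1_on D (\<lambda>x. f x + g x) \<le> l1_on D f + l1_on D g"
proof -
  let ?F = "support_on UNIV f \<union> support_on UNIV g"
  have fin: "finite ?F" using assms by blast
  have "l1_on D (\<lambda>x. f x + g x) = (\<Sum>x\<in>D \<inter> ?F. \<bar>f x + g x\<bar>)"
    by (rule l1_on_eq_sum[OF fin]) (auto simp: support_on_def)
  also have "\<dots> \<le> (\<Sum>x\<in>D \<inter> ?F. \<bar>f x\<bar>) + (\<Sum>x\<in>D \<inter> ?F. \<bar>g x\<bar>)"
    by (simp add: sum_mono abs_triangle_ineq flip: sum.distrib)
  also have "\<dots> = l1_on D f + l1_on D g"
    using l1_on_eq_sum[OF fin, of f D] l1_on_eq_sum[OF fin, of g D] by simp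
  finally show ?thesis .
qed

lemma l1_on_scale: "l1_on D (\<lambda>x. c * f x) = \<bar>c\<bar> * l1_on D f"
  by (cases "c = 0") (simp_all add: l1_on_def support_on_def abs_mult sum_distrib_left)

lemma l1_on_minus: "l1_on D (\<lambda>x. - f x) = l1_on D f"
  using l1_on_scale[of D "-1" f] by simp

lemma l1_on_mono:
  assumes "finite (support_on UNIV f)" "D \<subseteq> D'"
  shows "l1_on D f \<le> l1_on D' f"
proof -
  have "finite (support_on D' f)"
    using finite_subset[OF _ assms(1)] by (simp add: support_on_def subset_iff)
  then show ?thesis
    unfolding l1_on_def by (rule sum_mono2) (use assms(2) in \<open>auto simp: support_on_def\<close>)
qed

lemma abs_le_l1_on:
  assumes "finite (support_on UNIV f)" "x \<in> D"
  shows "\<bar>f x\<bar> \<le> l1_on D f"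
proof (cases "f x = 0")
  case False
  have "finite (support_on D f)"
    using finite_subset[OF _ assms(1)] by (simp add: support_on_def subset_iff)
  then show ?thesis
    unfolding l1_on_def
    by (intro member_le_sum) (use assms(2) False in \<open>auto simp: support_on_def\<close>)
qed (simp add: l1_on_nonneg)

lemma l1_on_delta: "l1_on D (\<lambda>x. if x = a then c else 0) = (if a \<in> D then \<bar>c\<bar> else 0)"
proof -
  have "support_on D (\<lambda>x. if x = a then c else 0) = (if a \<in> D \<and> c \<noteq> 0 then {a} else {})"
    by (auto simp: support_on_def)
  then show ?thesis by (simp add: l1_on_def)
qed

definition L_vectors :: "'a set \<Rightarrow> ('a univ \<Rightarrow> real) set" where
  "L_vectors P = {f. finite (support_on UNIV f) \<and> support_on UNIV f \<subseteq> pt ` P}"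

definition L_dist :: "'a set \<Rightarrow> ('a \<Rightarrow> 'a \<Rightarrow> bool) \<Rightarrow> 'a \<Rightarrow> ('a univ \<Rightarrow> real) \<Rightarrow> ('a univ \<Rightarrow> real) \<Rightarrow> real" where
  "L_dist P leq p f g = l1_on (pt ` down_set P leq p) (\<lambda>x. f x - g x)"

definition L_space :: "'a set \<Rightarrow> ('a \<Rightarrow> 'a \<Rightarrow> bool) \<Rightarrow> ('a univ \<Rightarrow> real) topology" where
  "L_space P leq = gauge_topology P (L_dist P leq) (L_vectors P)"

lemma L_dist_nonneg: "0 \<le> L_dist P leq p f g"
  by (simp add: L_dist_def l1_on_nonneg)

lemma L_vectors_finite: "f \<in> L_vectors P \<Longrightarrow> finite (support_on UNIV f)"
  by (simp add: L_vectors_def)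

lemma L_vectors_add:
  assumes "f \<in> L_vectors P" "g \<in> L_vectors P"
  shows "(\<lambda>x. f x + g x) \<in> L_vectors P"
proof -
  have sub: "support_on UNIV (\<lambda>x. f x + g x) \<subseteq> support_on UNIV f \<union> support_on UNIV g"
    by (auto simp: support_on_def)
  have "finite (support_on UNIV f \<union> support_on UNIV g)" "support_on UNIV f \<union> support_on UNIV g \<subseteq> pt ` P"
    using assms by (simp_all add: L_vectors_def)
  then show ?thesis
    using finite_subset[OF sub] order_trans[OF sub] by (simp add: L_vectors_def)
qed

lemma L_vectors_scale:
  assumes "f \<in> L_vectors P"
  shows "(\<lambda>x. c * f x) \<in> L_vectors P"
proof -
  have sub: "support_on UNIV (\<lambda>x. c * f x) \<subseteq> support_on UNIV f"
    by (auto simp: support_on_def)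
  have "finite (support_on UNIV f)" "support_on UNIV f \<subseteq> pt ` P"
    using assms by (simp_all add: L_vectors_def)
  then show ?thesis
    using finite_subset[OF sub] order_trans[OF sub] by (simp add: L_vectors_def)
qed

lemma L_vectors_diff:
  assumes "f \<in> L_vectors P" "g \<in> L_vectors P"
  shows "(\<lambda>x. f x - g x) \<in> L_vectors P"
proof -
  have "(\<lambda>x. f x - g x) = (\<lambda>x. f x + (-1) * g x)" by simp
  then show ?thesis using L_vectors_add[OF assms(1) L_vectors_scale[OF assms(2)]] by (simp only:)
qed

lemma fzero_L_vectors: "fzero \<in> L_vectors P"
  by (simp add: L_vectors_def fzero_def support_on_def)

lemma L_dist_triangle:
  assumes "f \<in> L_vectors P" "g \<in> L_vectors P" "h \<in> L_vectors P"
  shows "L_dist P leq p f h \<le> L_dist P leq p f g + L_dist P leq p g h"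
proof -
  let ?D = "pt ` down_set P leq p"
  have "L_dist P leq p f h = l1_on ?D (\<lambda>x. (f x - g x) + (g x - h x))"
    by (simp add: L_dist_def)
  also have "\<dots> \<le> l1_on ?D (\<lambda>x. f x - g x) + l1_on ?D (\<lambda>x. g x - h x)"
    by (rule l1_on_add_le[OF L_vectors_finite[OF L_vectors_diff[OF assms(1,2)]]
          L_vectors_finite[OF L_vectors_diff[OF assms(2,3)]]])
  finally show ?thesis by (simp add: L_dist_def)
qed

lemma L_dist_mono:
  assumes dir: "directed_set P leq" and "p \<in> P" "p' \<in> P" "leq p p'" "f \<in> L_vectors P" "g \<in> L_vectors P"
  shows "L_dist P leq p f g \<le> L_dist P leq p' f g"
  unfolding L_dist_def
  by (rule l1_on_mono[OF L_vectors_finite[OF L_vectors_diff[OF assms(5,6)]]])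
    (rule image_mono[OF down_set_mono[OF assms(1-4)]])

lemma directed_pseudometrics_L_dist:
  assumes dir: "directed_set P leq"
  shows "directed_pseudometrics P (L_dist P leq) (L_vectors P)"
  unfolding directed_pseudometrics_def
proof (intro conjI ballI)
  show "P \<noteq> {}" using directed_set_nonempty[OF dir] .
  show "L_dist P leq p f f = 0" for p f by (simp add: L_dist_def l1_on_def support_on_def)
  show "L_dist P leq p f g = L_dist P leq p g f" for p f g
    using l1_on_minus[of _ "\<lambda>x. f x - g x"] by (simp add: L_dist_def)
  show "L_dist P leq p f h \<le> L_dist P leq p f g + L_dist P leq p g h"
    if "f \<in> L_vectors P" "g \<in> L_vectors P" "h \<in> L_vectors P" for p f g h
    using L_dist_triangle[OF that] .
  fix p p' assume "p \<in> P" "p' \<in> P"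
  then obtain r where "r \<in> P" "leq p r" "leq p' r" using directed_set_upper_bound[OF dir] by blast
  then show "\<exists>r\<in>P. \<forall>f\<in>L_vectors P. \<forall>g\<in>L_vectors P.
      L_dist P leq p f g \<le> L_dist P leq r f g \<and> L_dist P leq p' f g \<le> L_dist P leq r f g"
    using L_dist_mono[OF dir] \<open>p \<in> P\<close> \<open>p' \<in> P\<close> by blast
qed

lemma tychonoff_L_space:
  assumes dir: "directed_set P leq"
  shows "tychonoff_space (L_space P leq)"
  unfolding L_space_def
proof (rule tychonoff_gauge_topology[OF directed_pseudometrics_L_dist[OF dir]])
  fix f g assume f: "f \<in> L_vectors P" and g: "g \<in> L_vectors P" and "f \<noteq> g"
  then obtain x where x: "f x \<noteq> g x" by auto
  then have "x \<in> support_on UNIV f \<union> support_on UNIV g" by (auto simp: support_on_def)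
  then obtain q where q: "q \<in> P" "x = pt q" using f g by (auto simp: L_vectors_def)
  have "\<bar>f x - g x\<bar> \<le> L_dist P leq q f g"
    unfolding L_dist_def
    by (rule abs_le_l1_on[OF L_vectors_finite[OF L_vectors_diff[OF f g]]])
      (simp add: q self_in_down_set[OF dir])
  then show "\<exists>p\<in>P. L_dist P leq p f g > 0" using x q(1) by force
qed

lemma topspace_L_space: "directed_set P leq \<Longrightarrow> topspace (L_space P leq) = L_vectors P"
  by (simp add: L_space_def topspace_gauge_topology[OF directed_pseudometrics_L_dist])

lemma L_dist_fadd_le:
  assumes "a \<in> L_vectors P" "b \<in> L_vectors P" "a' \<in> L_vectors P" "b' \<in> L_vectors P"
  shows "L_dist P leq p (fadd a b) (fadd a' b') \<le> L_dist P leq p a a' + L_dist P leq p b b'"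
proof -
  let ?D = "pt ` down_set P leq p"
  have "L_dist P leq p (fadd a b) (fadd a' b') = l1_on ?D (\<lambda>x. (a x - a' x) + (b x - b' x))"
    by (simp add: L_dist_def fadd_def algebra_simps)
  also have "\<dots> \<le> L_dist P leq p a a' + L_dist P leq p b b'"
    unfolding L_dist_def
    by (rule l1_on_add_le[OF L_vectors_finite[OF L_vectors_diff[OF assms(1,3)]]
          L_vectors_finite[OF L_vectors_diff[OF assms(2,4)]]])
  finally show ?thesis .
qed

lemma L_dist_fscale_le:
  assumes "f \<in> L_vectors P" "f' \<in> L_vectors P"
  shows "L_dist P leq p (fscale c f) (fscale c' f') \<le>
    \<bar>c - c'\<bar> * L_dist P leq p f fzero + \<bar>c'\<bar> * L_dist P leq p f f'"
proof -
  let ?D = "pt ` down_set P leq p"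
  have "L_dist P leq p (fscale c f) (fscale c' f') = l1_on ?D (\<lambda>x. (c - c') * f x + c' * (f x - f' x))"
    by (simp add: L_dist_def fscale_def algebra_simps)
  also have "\<dots> \<le> l1_on ?D (\<lambda>x. (c - c') * f x) + l1_on ?D (\<lambda>x. c' * (f x - f' x))"
    by (rule l1_on_add_le[OF L_vectors_finite[OF L_vectors_scale[OF assms(1)]]
          L_vectors_finite[OF L_vectors_scale[OF L_vectors_diff[OF assms]]]])
  also have "\<dots> = \<bar>c - c'\<bar> * L_dist P leq p f fzero + \<bar>c'\<bar> * L_dist P leq p f f'"
    by (simp add: L_dist_def fzero_def l1_on_scale)
  finally show ?thesis .
qed

lemma L_dist_convex_combination_le:
  assumes "f \<in> L_vectors P" "g \<in> L_vectors P" "0 \<le> t" "t \<le> 1"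
  shows "L_dist P leq p fzero (fadd (fscale t f) (fscale (1 - t) g)) \<le>
    t * L_dist P leq p fzero f + (1 - t) * L_dist P leq p fzero g"
proof -
  let ?D = "pt ` down_set P leq p"
  have "L_dist P leq p fzero (fadd (fscale t f) (fscale (1 - t) g)) = l1_on ?D (\<lambda>x. t * (- f x) + (1 - t) * (- g x))"
    by (simp add: L_dist_def fzero_def fadd_def fscale_def algebra_simps)
  also have "\<dots> \<le> l1_on ?D (\<lambda>x. t * (- f x)) + l1_on ?D (\<lambda>x. (1 - t) * (- g x))"
  proof (rule l1_on_add_le)
    show "finite (support_on UNIV (\<lambda>x. t * (- f x)))"
      using L_vectors_finite[OF L_vectors_scale[OF assms(1), of "- t"]] by simp
    show "finite (support_on UNIV (\<lambda>x. (1 - t) * (- g x)))"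
      using L_vectors_finite[OF L_vectors_scale[OF assms(2), of "t - 1"]] by (simp add: algebra_simps)
  qed
  also have "\<dots> = t * L_dist P leq p fzero f + (1 - t) * L_dist P leq p fzero g"
    using assms(3,4) by (simp add: L_dist_def fzero_def l1_on_minus l1_on_scale)
  finally show ?thesis .
qed

context
  fixes P :: "'a set" and leq
  assumes dir: "directed_set P leq"
begin

lemma continuous_map_L_fadd:
  "continuous_map (prod_topology (L_space P leq) (L_space P leq)) (L_space P leq) (\<lambda>(f, g). fadd f g)"
  unfolding L_space_def
proof (rule continuous_map_into_gauge_topology[OF directed_pseudometrics_L_dist[OF dir]])
  let ?L = "gauge_topology P (L_dist P leq) (L_vectors P)"
  note gauge = directed_pseudometrics_L_dist[OF dir]
  have tL: "topspace ?L = L_vectors P" using topspace_gauge_topology[OF gauge] .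
  show "(\<lambda>(f, g). fadd f g) \<in> topspace (prod_topology ?L ?L) \<rightarrow> L_vectors P"
    using L_vectors_add by (auto simp: tL fadd_def)
  fix ab p and r :: real
  assume ab: "ab \<in> topspace (prod_topology ?L ?L)" and p: "p \<in> P" and r: "r > 0"
  obtain a b where ab_eq: "ab = (a, b)" and a: "a \<in> L_vectors P" and b: "b \<in> L_vectors P"
    using ab by (auto simp: tL)
  let ?U = "gauge_ball (L_dist P leq) (L_vectors P) p a (r/2) \<times> gauge_ball (L_dist P leq) (L_vectors P) p b (r/2)"
  have "openin (prod_topology ?L ?L) ?U"
    by (simp add: openin_prod_Times_iff openin_gauge_ball[OF gauge p a] openin_gauge_ball[OF gauge p b])
  moreover have "ab \<in> ?U"
    using centre_in_gauge_ball[OF gauge p] a b r by (simp add: ab_eq)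
  moreover have "(\<lambda>(f, g). fadd f g) ` ?U \<subseteq> gauge_ball (L_dist P leq) (L_vectors P) p ((\<lambda>(f, g). fadd f g) ab) r"
  proof clarify
    fix a' b' assume a': "a' \<in> gauge_ball (L_dist P leq) (L_vectors P) p a (r/2)"
      and b': "b' \<in> gauge_ball (L_dist P leq) (L_vectors P) p b (r/2)"
    then have "a' \<in> L_vectors P" "b' \<in> L_vectors P" by (simp_all add: gauge_ball_def)
    then show "fadd a' b' \<in> gauge_ball (L_dist P leq) (L_vectors P) p ((\<lambda>(f, g). fadd f g) ab) r"
      using L_dist_fadd_le[OF a b, of a' b' leq p] a' b' L_vectors_add
      by (fastforce simp: gauge_ball_def ab_eq fadd_def)
  qed
  ultimately show "\<exists>U. openin (prod_topology ?L ?L) U \<and> ab \<in> U \<and>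
      (\<lambda>(f, g). fadd f g) ` U \<subseteq> gauge_ball (L_dist P leq) (L_vectors P) p ((\<lambda>(f, g). fadd f g) ab) r"
    by blast
qed

lemma continuous_map_L_fscale:
  "continuous_map (prod_topology euclideanreal (L_space P leq)) (L_space P leq) (\<lambda>(c, f). fscale c f)"
  unfolding L_space_def
proof (rule continuous_map_into_gauge_topology[OF directed_pseudometrics_L_dist[OF dir]])
  let ?L = "gauge_topology P (L_dist P leq) (L_vectors P)"
  let ?ball = "gauge_ball (L_dist P leq) (L_vectors P)"
  note gauge = directed_pseudometrics_L_dist[OF dir]
  have tL: "topspace ?L = L_vectors P" using topspace_gauge_topology[OF gauge] .
  show "(\<lambda>(c, f). fscale c f) \<in> topspace (prod_topology euclideanreal ?L) \<rightarrow> L_vectors P"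
    using L_vectors_scale by (auto simp: tL fscale_def)
  fix cf p and r :: real
  assume cf: "cf \<in> topspace (prod_topology euclideanreal ?L)" and p: "p \<in> P" and r: "r > 0"
  obtain c f where cf_eq: "cf = (c, f)" and f: "f \<in> L_vectors P" using cf by (auto simp: tL)
  define M where "M = L_dist P leq p f fzero"
  have M: "0 \<le> M" by (simp add: M_def L_dist_nonneg)
  define \<delta> where "\<delta> = min 1 (r / (M + \<bar>c\<bar> + 2))"
  have den: "0 < M + \<bar>c\<bar> + 2" using M by simp
  have "\<delta> \<le> r / (M + \<bar>c\<bar> + 2)" by (simp add: \<delta>_def)
  then have "\<delta> * (M + \<bar>c\<bar> + 2) \<le> r" using den by (simp add: pos_le_divide_eq)
  moreover have "0 < \<delta>" "\<delta> \<le> 1" using r den by (simp_all add: \<delta>_def)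
  ultimately have \<delta>: "0 < \<delta>" "\<delta> \<le> 1" "\<delta> * (M + \<bar>c\<bar> + 2) \<le> r" by blast+
  let ?U = "ball c \<delta> \<times> ?ball p f \<delta>"
  have "openin (prod_topology euclideanreal ?L) ?U"
    by (simp add: openin_prod_Times_iff openin_gauge_ball[OF gauge p f])
  moreover have "cf \<in> ?U" using centre_in_gauge_ball[OF gauge p f] \<delta>(1) by (simp add: cf_eq)
  moreover have "fscale c' f' \<in> ?ball p (fscale c f) r" if "c' \<in> ball c \<delta>" "f' \<in> ?ball p f \<delta>" for c' f'
  proof -
    have c': "\<bar>c - c'\<bar> < \<delta>" and f': "f' \<in> L_vectors P" "L_dist P leq p f f' < \<delta>"
      using that by (auto simp: dist_real_def gauge_ball_def)
    have "L_dist P leq p (fscale c f) (fscale c' f') \<le> \<bar>c - c'\<bar> * M + \<bar>c'\<bar> * L_dist P leq p f f'"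
      using L_dist_fscale_le[OF f f'(1)] by (simp add: M_def)
    also have "\<dots> \<le> \<delta> * M + (\<bar>c\<bar> + 1) * L_dist P leq p f f'"
      using c' \<delta>(2) M L_dist_nonneg by (intro add_mono mult_right_mono) auto
    also have "\<dots> < \<delta> * M + (\<bar>c\<bar> + 1) * \<delta>"
      using mult_strict_left_mono[OF f'(2), of "\<bar>c\<bar> + 1"] by linarith
    also have "\<dots> \<le> \<delta> * (M + \<bar>c\<bar> + 2)"
      using \<delta>(1) by (simp add: algebra_simps)
    finally show ?thesis using \<delta>(3) L_vectors_scale[OF f'(1)] by (simp add: gauge_ball_def fscale_def)
  qed
  ultimately show "\<exists>U. openin (prod_topology euclideanreal ?L) U \<and> cf \<in> U \<and>
      (\<lambda>(c, f). fscale c f) ` U \<subseteq> ?ball p ((\<lambda>(c, f). fscale c f) cf) r"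
    by (intro exI[of _ ?U]) (auto simp: cf_eq)
qed

lemma convex_in_L_ball:
  "convex_in (gauge_ball (L_dist P leq) (L_vectors P) p fzero r)"
  unfolding convex_in_def
proof (intro ballI allI impI)
  fix f g and t :: real
  assume f: "f \<in> gauge_ball (L_dist P leq) (L_vectors P) p fzero r"
    and g: "g \<in> gauge_ball (L_dist P leq) (L_vectors P) p fzero r" and t: "0 \<le> t \<and> t \<le> 1"
  then have fg: "f \<in> L_vectors P" "g \<in> L_vectors P" by (simp_all add: gauge_ball_def)
  have "L_dist P leq p fzero (fadd (fscale t f) (fscale (1 - t) g)) \<le>
      t * L_dist P leq p fzero f + (1 - t) * L_dist P leq p fzero g"
    using L_dist_convex_combination_le[OF fg] t by blast
  also have "\<dots> < r"
    by (rule convex_bound_lt) (use f g t in \<open>auto simp: gauge_ball_def\<close>)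
  finally show "fadd (fscale t f) (fscale (1 - t) g) \<in> gauge_ball (L_dist P leq) (L_vectors P) p fzero r"
    using fg by (simp add: gauge_ball_def fadd_def fscale_def L_vectors_add L_vectors_scale)
qed

theorem locally_convex_tvs_L: "locally_convex_tvs (L_vectors P) (L_space P leq)"
  unfolding locally_convex_tvs_def
proof (intro conjI ballI allI impI continuous_map_L_fadd continuous_map_L_fscale fzero_L_vectors)
  show "fadd f g \<in> L_vectors P" if "f \<in> L_vectors P" "g \<in> L_vectors P" for f g
    using L_vectors_add[OF that] by (simp add: fadd_def)
  show "fscale c f \<in> L_vectors P" if "f \<in> L_vectors P" for c f
    using L_vectors_scale[OF that] by (simp add: fscale_def)
  show "topspace (L_space P leq) = L_vectors P" by (rule topspace_L_space[OF dir])
  fix U assume U: "openin (L_space P leq) U \<and> fzero \<in> U"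
  then obtain p r where p: "p \<in> P" "r > 0" "gauge_ball (L_dist P leq) (L_vectors P) p fzero r \<subseteq> U"
    unfolding L_space_def openin_gauge_topology[OF directed_pseudometrics_L_dist[OF dir]] by blast
  then show "\<exists>W. openin (L_space P leq) W \<and> fzero \<in> W \<and> W \<subseteq> U \<and> convex_in W"
    using openin_gauge_ball[OF directed_pseudometrics_L_dist[OF dir] p(1) fzero_L_vectors]
      centre_in_gauge_ball[OF directed_pseudometrics_L_dist[OF dir] p(1) fzero_L_vectors p(2)]
      convex_in_L_ball
    unfolding L_space_def by blast
qed


lemma L_dist_fzero_delta:
  assumes "p \<in> P"
  shows "L_dist P leq q fzero (\<lambda>x. if x = pt p then c else 0) = (if leq p q then \<bar>c\<bar> else 0)"
proof -
  have "L_dist P leq q fzero (\<lambda>x. if x = pt p then c else 0) =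
      l1_on (pt ` down_set P leq q) (\<lambda>x. if x = pt p then - c else 0)"
    unfolding L_dist_def fzero_def by (rule arg_cong[where f = "l1_on _"]) auto
  moreover have "pt p \<in> pt ` down_set P leq q \<longleftrightarrow> leq p q"
    using assms by (auto simp: down_set_def)
  ultimately show ?thesis by (simp add: l1_on_delta)
qed

theorem tukey_eq_nbhds_L:
  "tukey_eq (times_omega P) (times_omega_le leq) (nbhds (L_space P leq) {fzero}) rev_incl"
proof (rule tukey_eq_if_cofinal_embedding[OF _ _ _ transp_on_rev_incl])
  note gauge = directed_pseudometrics_L_dist[OF dir]
  define B where "B = (\<lambda>(p, n). gauge_ball (L_dist P leq) (L_vectors P) p fzero (1 / Suc n))"
  show "B ` times_omega P \<subseteq> nbhds (L_space P leq) {fzero}"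
    using openin_gauge_ball[OF gauge _ fzero_L_vectors] centre_in_gauge_ball[OF gauge _ fzero_L_vectors]
    by (auto simp: B_def times_omega_def nbhds_def L_space_def)
  show "rev_incl (B pn) (B pn') \<longleftrightarrow> times_omega_le leq pn pn'"
    if "pn \<in> times_omega P" "pn' \<in> times_omega P" for pn pn'
  proof -
    obtain p n p' n' where pn: "pn = (p, n)" "pn' = (p', n')" by fastforce
    have p: "p \<in> P" "p' \<in> P" using that by (auto simp: pn times_omega_def)
    let ?h = "\<lambda>c x. if x = pt p then c else (0::real)"
    have h: "?h c \<in> L_vectors P" for c
      using p(1) by (auto simp: L_vectors_def support_on_def)
    have dist_h: "L_dist P leq q fzero (?h c) = (if leq p q then \<bar>c\<bar> else 0)" for q c
      using L_dist_fzero_delta[OF p(1)] .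
    show ?thesis
    proof
      assume sub: "rev_incl (B pn) (B pn')"
      have "leq p p'"
      proof (rule ccontr)
        assume "\<not> leq p p'"
        then have "?h 1 \<in> B pn'" using h dist_h by (simp add: B_def pn gauge_ball_def)
        then have "?h 1 \<in> B pn" using sub by (auto simp: rev_incl_def)
        then show False
          using dist_h directed_set_refl[OF dir p(1)] by (simp add: B_def pn gauge_ball_def)
      qed
      moreover have "n \<le> n'"
      proof (rule ccontr)
        assume "\<not> n \<le> n'"
        then have "?h (1 / Suc n) \<in> B pn'"
          using h dist_h \<open>leq p p'\<close> by (simp add: B_def pn gauge_ball_def frac_less2)
        then have "?h (1 / Suc n) \<in> B pn" using sub by (auto simp: rev_incl_def)
        then show False
          using dist_h directed_set_refl[OF dir p(1)] by (simp add: B_def pn gauge_ball_def)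
      qed
      ultimately show "times_omega_le leq pn pn'" by (simp add: pn times_omega_le_def)
    next
      assume "times_omega_le leq pn pn'"
      then have le: "leq p p'" "n \<le> n'" by (simp_all add: pn times_omega_le_def)
      have "L_dist P leq p fzero f \<le> L_dist P leq p' fzero f" if "f \<in> L_vectors P" for f
        using L_dist_mono[OF dir p le(1) fzero_L_vectors that] .
      moreover have "1 / real (Suc n') \<le> 1 / Suc n" using le(2) by (simp add: frac_le)
      ultimately show "rev_incl (B pn) (B pn')"
        by (fastforce simp: B_def pn rev_incl_def gauge_ball_def)
    qed
  qed
  show "\<exists>pn\<in>times_omega P. rev_incl N (B pn)" if N: "N \<in> nbhds (L_space P leq) {fzero}" for N
  proof -
    obtain p r where p: "p \<in> P" "r > 0" "gauge_ball (L_dist P leq) (L_vectors P) p fzero r \<subseteq> N"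
      using N unfolding nbhds_def L_space_def openin_gauge_topology[OF gauge] by blast
    obtain n where "1 / Suc n < r" using p(2) by (metis nat_approx_posE)
    then have "B (p, n) \<subseteq> N" using p(3) by (auto simp: B_def gauge_ball_def)
    then show ?thesis using p(1) by (auto simp: times_omega_def rev_incl_def)
  qed
qed


end

theorem mainTheorem1:
  fixes P :: "'a set" and leq :: "'a \<Rightarrow> 'a \<Rightarrow> bool"
  assumes "directed_set P leq"
  shows
    "(\<exists>X :: 'a univ topology.
        tychonoff_space X \<and> locally_compact_space X \<and> Hausdorff_space X \<and>
        tukey_eq P leq (compact_sets X) (\<subseteq>))
   \<and> (\<exists>(K :: 'a univ topology) x.
        tychonoff_space K \<and> compact_space K \<and> Hausdorff_space K \<and> x \<in> topspace K \<and>
        tukey_eq P leq (nbhds K {x}) rev_incl)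
   \<and> (\<exists>(G :: 'a univ monoid) (T :: 'a univ topology).
        topological_group G T \<and> tychonoff_space T \<and>
        tukey_eq P leq (nbhds T {\<one>\<^bsub>G\<^esub>}) rev_incl)
   \<and> (\<exists>(V :: ('a univ \<Rightarrow> real) set) (T :: ('a univ \<Rightarrow> real) topology).
        locally_convex_tvs V T \<and> tychonoff_space T \<and>
        tukey_eq (times_omega P) (times_omega_le leq) (nbhds T {fzero}) rev_incl)
   \<and> (\<exists>(Y :: 'a univ topology) \<U>.
        tychonoff_space Y \<and> universal_uniformity Y \<U> \<and>
        tukey_eq P leq \<U> rev_incl)
   \<and> (\<exists>Y :: 'a univ topology.
        tychonoff_space Y \<and>
        tukey_eq P leq (nbhds (prod_topology Y Y) (diagonal Y)) rev_incl)"
proof -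
  obtain K :: "'a univ topology" and x where K: "compact_space K" "Hausdorff_space K" "x \<in> topspace K"
    and tukey_K: "tukey_eq P leq (nbhds K {x}) rev_incl"
    using compact_space_tukey_eq_nbhds[OF assms] .
  let ?X = "subtopology K (topspace K - {x})"
  have tychonoff_K: "tychonoff_space K" using tychonoff_if_compact_Hausdorff[OF K(1,2)] .
  have "tukey_eq P leq (compact_sets ?X) (\<subseteq>)"
    using tukey_eq_trans[OF tukey_K tukey_eq_sym[OF tukey_eq_compact_sets_punctured[OF K]]] .
  then show ?thesis
    apply (intro conjI)
    subgoal using tychonoff_space_subtopology[OF tychonoff_K] locally_compact_space_punctured[OF K(1,2)]
        Hausdorff_space_subtopology[OF K(2)] by blast
    subgoal using K tychonoff_K tukey_K by blast
    subgoal using topological_group_G[OF assms] tychonoff_G_space[OF assms] tukey_eq_nbhds_G[OF assms]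
      by blast
    subgoal using locally_convex_tvs_L[OF assms] tychonoff_L_space[OF assms] tukey_eq_nbhds_L[OF assms]
      by blast
    subgoal using tychonoff_Y_space[OF assms] universal_uniformity_Y_space[OF assms]
        tukey_eq_Y_uniformity[OF assms] by blast
    subgoal using tychonoff_Y_space[OF assms] tukey_eq_nbhds_diagonal_Y_space[OF assms] by blast
    done
qed

end
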